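(* Let $\Lambda$ be a row-finite $k$-graph with no sources and $R$ a commutative ring with $1$. Let $(\alpha,\beta)\in\Sigma$ and $x\in\mathfrak{T}_\Lambda$. (a) If $x\notin F_{\alpha,\beta}$, then there exist $\mu,\nu\in\Lambda$ such that $x\in Z(\mu)\cap Z(\nu)$ and $s_\mu s_{\mu^*}s_\alpha s_{\beta^*}s_\nu s_{\nu^*}=0$ in ${\rm KP}_R(\Lambda)$. (b) If $x\in F_{\alpha,\beta}$, then there exists $\gamma\in\Lambda$ with $x\in Z(\alpha\gamma)\cap Z(\beta\gamma)$, $s_{\alpha\gamma}s_{(\alpha\gamma)^*}s_\alpha s_{\beta^*}s_{\beta\gamma}s_{(\beta\gamma)^*}=s_{\alpha\gamma}s_{(\beta\gamma)^*}$, and $(\alpha\gamma,\beta\gamma)$ a cycline pair.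
   Context: A $k$-graph is a countable category $\Lambda$ (vertices $\Lambda^0$, paths, maps $r,s$) with a degree functor $d:\Lambda\to\mathbb{N}^k$ satisfying unique factorization: if $d(\lambda)=m+n$ there are unique $\mu,\nu$ with $s(\mu)=r(\nu)$, $d(\mu)=m,d(\nu)=n$, $\lambda=\mu\nu$. $v\Lambda=\{\lambda:r(\lambda)=v\}$, $v\Lambda^n$ those of degree $n$; row-finite with no sources means each $v\Lambda^n$ is finite and nonempty. ${\rm KP}_R(\Lambda)$ is the universal $R$-algebra generated by $p_v$ ($v\in\Lambda^0$), $s_\lambda,s_{\lambda^*}$ ($d(\lambda)\ne0$) with relations (KP1) $p_v$ mutually orthogonal idempotents; (KP2) $s_\lambda s_\mu=s_{\lambda\mu}$, $s_{\mu^*}s_{\lambda^*}=s_{(\lambda\mu)^*}$, $p_{r(\lambda)}s_\lambda=s_\lambda=s_\lambda p_{s(\lambda)}$, $p_{s(\lambda)}s_{\lambda^*}=s_{\lambda^*}=s_{\lambda^*}p_{r(\lambda)}$ when $r(\mu)=s(\lambda)$; (KP3) $s_{\lambda^*}s_\mu=\delta_{\lambda,\mu}p_{s(\lambda)}$ when $d(\lambda)=d(\mu)$; (KP4) $p_v=\sum_{\lambda\in v\Lambda^n}s_\lambda s_{\lambda^*}$ for $n\ne0$. Convention $s_v=s_{v^*}=p_v$. A pair $(\alpha,\beta)$ with $s(\alpha)=s(\beta)$ is cycline if $s_{\alpha\gamma}s_{(\alpha\gamma)^*}=s_{\beta\gamma}s_{(\beta\gamma)^*}$ for all $\gamma\in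 s(\alpha)\Lambda$. Let $\Omega_k$ be the $k$-graph with objects $\mathbb{N}^k$, morphisms $\{(p,q):p\le q\}$, $r(p,q)=p$, $s(p,q)=q$, $(p,q)(q,t)=(p,t)$, $d(p,q)=q-p$. An infinite path is a degree-preserving functor $x:\Omega_k\to\Lambda$; $\Lambda^\infty$ is the set of infinite paths. For $\mu\in\Lambda$, $Z(\mu)=\{x\in\Lambda^\infty: x(0,d(\mu))=\mu\}$; these cylinder sets form a basis of compact open sets for a Hausdorff topology on $\Lambda^\infty$. For $p\in\mathbb{N}^k$, $\sigma^p:\Lambda^\infty\to\Lambda^\infty$ is $\sigma^p(x)(m,n)=x(m+p,n+p)$. Let $\Sigma=\{(\alpha,\beta)\in\Lambda\times\Lambda: s(\alpha)=s(\beta),\ \alpha\ne\beta\}$; for $(\alpha,\beta)\in\Sigma$ let $F_{\alpha,\beta}=\{x\in Z(\alpha)\cap Z(\beta): \sigma^{d(\alpha)}(x)=\sigma^{d(\beta)}(x)\}$. The set of regular paths is $\mathfrak{T}_\Lambda=\Lambda^\infty\setminus\bigcup_{(\alpha,\beta)\in\Sigma}\partial F_{\alpha,\beta}$, where $\partial$ denotes topological boundary. *)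

theory Defs
  imports "HOL-Analysis.Analysis" "HOL-Library.Function_Algebras"
begin

text \<open>Degrees live in N^k, represented as 'k => nat for a finite (nonempty) index type 'k;
  addition, zero, subtraction and the (pointwise) order are the pointwise ones.\<close>

record ('v,'a,'k) kgraph =
  Obj :: "'v set"
  Mor :: "'a set"
  rg  :: "'a \<Rightarrow> 'v"
  sr  :: "'a \<Rightarrow> 'v"
  idt :: "'v \<Rightarrow> 'a"
  cmp :: "'a \<Rightarrow> 'a \<Rightarrow> 'a"
  dg  :: "'a \<Rightarrow> 'k \<Rightarrow> nat"

definition kgraph :: "('v,'a,'k::finite) kgraph \<Rightarrow> bool" where
  "kgraph L \<longleftrightarrow>
     countable (Obj L) \<and> countable (Mor L) \<and>
     (\<forall>l\<in>Mor L. rg L l \<in> Obj L \<and> sr L l \<in> Obj L) \<and>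
     (\<forall>v\<in>Obj L. idt L v \<in> Mor L \<and> rg L (idt L v) = v \<and> sr L (idt L v) = v
                 \<and> dg L (idt L v) = 0) \<and>
     (\<forall>l\<in>Mor L. \<forall>m\<in>Mor L. sr L l = rg L m \<longrightarrow>
        cmp L l m \<in> Mor L \<and> rg L (cmp L l m) = rg L l \<and> sr L (cmp L l m) = sr L m
        \<and> dg L (cmp L l m) = dg L l + dg L m) \<and>
     (\<forall>l\<in>Mor L. cmp L (idt L (rg L l)) l = l \<and> cmp L l (idt L (sr L l)) = l) \<and>
     (\<forall>l\<in>Mor L. \<forall>m\<in>Mor L. \<forall>n\<in>Mor L. sr L l = rg L m \<longrightarrow> sr L m = rg L n \<longrightarrow>
        cmp L (cmp L l m) n = cmp L l (cmp L m n)) \<and>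
     (\<forall>l\<in>Mor L. \<forall>m n. dg L l = m + n \<longrightarrow>
        (\<exists>!p. fst p \<in> Mor L \<and> snd p \<in> Mor L \<and> sr L (fst p) = rg L (snd p)
              \<and> dg L (fst p) = m \<and> dg L (snd p) = n \<and> l = cmp L (fst p) (snd p)))"

definition vLn :: "('v,'a,'k) kgraph \<Rightarrow> 'v \<Rightarrow> ('k \<Rightarrow> nat) \<Rightarrow> 'a set" where
  "vLn L v n = {l \<in> Mor L. rg L l = v \<and> dg L l = n}"

definition row_finite_no_sources :: "('v,'a,'k) kgraph \<Rightarrow> bool" where
  "row_finite_no_sources L \<longleftrightarrow> (\<forall>v\<in>Obj L. \<forall>n. finite (vLn L v n) \<and> vLn L v n \<noteq> {})"

text \<open>An infinite path is a degree preserving functor Omega_k -> Lambda, given by its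
  values x p q on morphisms (p,q), p <= q; it is made extensional by setting the
  value to undefined when not p <= q.\<close>

type_synonym ('a,'k) ipath = "('k \<Rightarrow> nat) \<Rightarrow> ('k \<Rightarrow> nat) \<Rightarrow> 'a"

definition inf_paths :: "('v,'a,'k) kgraph \<Rightarrow> ('a,'k) ipath set" where
  "inf_paths L = {x.
     (\<forall>p q. p \<le> q \<longrightarrow> x p q \<in> Mor L \<and> dg L (x p q) = q - p) \<and>
     (\<forall>p. x p p = idt L (rg L (x p p))) \<and>
     (\<forall>p q t. p \<le> q \<longrightarrow> q \<le> t \<longrightarrow>
        sr L (x p q) = rg L (x q t) \<and> x p t = cmp L (x p q) (x q t)) \<and>
     (\<forall>p q. \<not> p \<le> q \<longrightarrow> x p q = undefined)}"

definition cyl :: "('v,'a,'k) kgraph \<Rightarrow> 'a \<Rightarrow> ('a,'k) ipath set" where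
  "cyl L \<mu> = {x \<in> inf_paths L. x 0 (dg L \<mu>) = \<mu>}"

definition pshift :: "('a,'k) ipath \<Rightarrow> ('k \<Rightarrow> nat) \<Rightarrow> ('a,'k) ipath" where
  "pshift x p = (\<lambda>m n. if m \<le> n then x (m + p) (n + p) else undefined)"

definition path_top :: "('v,'a,'k) kgraph \<Rightarrow> ('a,'k) ipath topology" where
  "path_top L = topology_generated_by {cyl L \<mu> | \<mu>. \<mu> \<in> Mor L}"

definition KSigma :: "('v,'a,'k) kgraph \<Rightarrow> ('a \<times> 'a) set" where
  "KSigma L = {(\<alpha>,\<beta>). \<alpha> \<in> Mor L \<and> \<beta> \<in> Mor L \<and> sr L \<alpha> = sr L \<beta> \<and> \<alpha> \<noteq> \<beta>}"

definition Fset :: "('v,'a,'k) kgraph \<Rightarrow> 'a \<Rightarrow> 'a \<Rightarrow> ('a,'k) ipath set" where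
  "Fset L \<alpha> \<beta> = {x \<in> cyl L \<alpha> \<inter> cyl L \<beta>. pshift x (dg L \<alpha>) = pshift x (dg L \<beta>)}"

definition regular_paths :: "('v,'a,'k) kgraph \<Rightarrow> ('a,'k) ipath set" where
  "regular_paths L = inf_paths L - (\<Union>(\<alpha>,\<beta>)\<in>KSigma L. path_top L frontier_of Fset L \<alpha> \<beta>)"

text \<open>KP_R(Lambda) is the quotient of the free (noncommutative) R-algebra on the generators
  by the two-sided ideal generated by the relations (KP1)-(KP4). We realise the free
  algebra as finitely supported functions from words in the generators to R, and
  express equality in KP_R(Lambda) as membership of the difference in that ideal.\<close>

datatype ('v,'a) kpgen = GP 'v | GS 'a | GSs 'a

type_synonym ('v,'a,'r) fa = "('v,'a) kpgen list \<Rightarrow> 'r"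

definition fa_mon :: "('v,'a) kpgen list \<Rightarrow> ('v,'a,'r::comm_ring_1) fa" where
  "fa_mon w = (\<lambda>u. if u = w then 1 else 0)"

definition fa_zero :: "('v,'a,'r::comm_ring_1) fa" where
  "fa_zero = (\<lambda>u. 0)"

definition fa_add :: "('v,'a,'r::comm_ring_1) fa \<Rightarrow> ('v,'a,'r) fa \<Rightarrow> ('v,'a,'r) fa" where
  "fa_add f g = (\<lambda>u. f u + g u)"

definition fa_diff :: "('v,'a,'r::comm_ring_1) fa \<Rightarrow> ('v,'a,'r) fa \<Rightarrow> ('v,'a,'r) fa" where
  "fa_diff f g = (\<lambda>u. f u - g u)"

definition fa_sum :: "'b set \<Rightarrow> ('b \<Rightarrow> ('v,'a,'r::comm_ring_1) fa) \<Rightarrow> ('v,'a,'r) fa" where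
  "fa_sum A F = (\<lambda>u. \<Sum>b\<in>A. F b u)"

definition fa_mul :: "('v,'a,'r::comm_ring_1) fa \<Rightarrow> ('v,'a,'r) fa \<Rightarrow> ('v,'a,'r) fa" where
  "fa_mul f g = (\<lambda>w. \<Sum>i\<le>length w. f (take i w) * g (drop i w))"

definition fa_prod :: "('v,'a,'r::comm_ring_1) fa list \<Rightarrow> ('v,'a,'r) fa" where
  "fa_prod xs = foldr fa_mul xs (fa_mon [])"

definition fa_fin :: "('v,'a,'r::comm_ring_1) fa \<Rightarrow> bool" where
  "fa_fin f \<longleftrightarrow> finite {w. f w \<noteq> 0}"

text \<open>Generators p_v, s_lambda, s_lambda*, with the convention s_v = s_v* = p_v
  for paths of degree 0 (which are the vertices).\<close>

definition kp_p :: "('v,'a,'k) kgraph \<Rightarrow> 'v \<Rightarrow> ('v,'a,'r::comm_ring_1) fa" where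
  "kp_p L v = fa_mon [GP v]"

definition kp_s :: "('v,'a,'k) kgraph \<Rightarrow> 'a \<Rightarrow> ('v,'a,'r::comm_ring_1) fa" where
  "kp_s L l = (if dg L l = 0 then fa_mon [GP (rg L l)] else fa_mon [GS l])"

definition kp_ss :: "('v,'a,'k) kgraph \<Rightarrow> 'a \<Rightarrow> ('v,'a,'r::comm_ring_1) fa" where
  "kp_ss L l = (if dg L l = 0 then fa_mon [GP (rg L l)] else fa_mon [GSs l])"

definition kp_rels :: "('v,'a,'k) kgraph \<Rightarrow> ('v,'a,'r::comm_ring_1) fa set" where
  "kp_rels L =
     \<comment> \<open>(KP1)\<close>
     {fa_diff (fa_mul (kp_p L v) (kp_p L w)) (if v = w then kp_p L v else fa_zero)
       | v w. v \<in> Obj L \<and> w \<in> Obj L}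
   \<union> \<comment> \<open>(KP2)\<close>
     {fa_diff (fa_mul (kp_s L l) (kp_s L m)) (kp_s L (cmp L l m))
       | l m. l \<in> Mor L \<and> m \<in> Mor L \<and> rg L m = sr L l \<and> dg L l \<noteq> 0 \<and> dg L m \<noteq> 0}
   \<union> {fa_diff (fa_mul (kp_ss L m) (kp_ss L l)) (kp_ss L (cmp L l m))
       | l m. l \<in> Mor L \<and> m \<in> Mor L \<and> rg L m = sr L l \<and> dg L l \<noteq> 0 \<and> dg L m \<noteq> 0}
   \<union> {fa_diff (fa_mul (kp_p L (rg L l)) (kp_s L l)) (kp_s L l) | l. l \<in> Mor L \<and> dg L l \<noteq> 0}
   \<union> {fa_diff (fa_mul (kp_s L l) (kp_p L (sr L l))) (kp_s L l) | l. l \<in> Mor L \<and> dg L l \<noteq> 0}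
   \<union> {fa_diff (fa_mul (kp_p L (sr L l)) (kp_ss L l)) (kp_ss L l) | l. l \<in> Mor L \<and> dg L l \<noteq> 0}
   \<union> {fa_diff (fa_mul (kp_ss L l) (kp_p L (rg L l))) (kp_ss L l) | l. l \<in> Mor L \<and> dg L l \<noteq> 0}
   \<union> \<comment> \<open>(KP3)\<close>
     {fa_diff (fa_mul (kp_ss L l) (kp_s L m)) (if l = m then kp_p L (sr L l) else fa_zero)
       | l m. l \<in> Mor L \<and> m \<in> Mor L \<and> dg L l = dg L m \<and> dg L l \<noteq> 0}
   \<union> \<comment> \<open>(KP4)\<close>
     {fa_diff (kp_p L v) (fa_sum (vLn L v n) (\<lambda>l. fa_mul (kp_s L l) (kp_ss L l)))
       | v n. v \<in> Obj L \<and> n \<noteq> 0}"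

inductive_set kp_ideal :: "('v,'a,'k) kgraph \<Rightarrow> ('v,'a,'r::comm_ring_1) fa set"
  for L :: "('v,'a,'k) kgraph" where
  kp_ideal_zero: "fa_zero \<in> kp_ideal L"
| kp_ideal_gen: "r \<in> kp_rels L \<Longrightarrow> fa_fin a \<Longrightarrow> fa_fin b \<Longrightarrow> fa_mul (fa_mul a r) b \<in> kp_ideal L"
| kp_ideal_add: "x \<in> kp_ideal L \<Longrightarrow> y \<in> kp_ideal L \<Longrightarrow> fa_add x y \<in> kp_ideal L"

definition kp_eq :: "('v,'a,'k) kgraph \<Rightarrow> ('v,'a,'r::comm_ring_1) fa \<Rightarrow> ('v,'a,'r) fa \<Rightarrow> bool" where
  "kp_eq L a b \<longleftrightarrow> fa_diff a b \<in> kp_ideal L"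

definition cycline :: "('v,'a,'k) kgraph \<Rightarrow> 'r::comm_ring_1 itself \<Rightarrow> 'a \<Rightarrow> 'a \<Rightarrow> bool" where
  "cycline L R \<alpha> \<beta> \<longleftrightarrow> sr L \<alpha> = sr L \<beta> \<and>
     (\<forall>\<gamma>\<in>Mor L. rg L \<gamma> = sr L \<alpha> \<longrightarrow>
        kp_eq L (fa_mul (kp_s L (cmp L \<alpha> \<gamma>)) (kp_ss L (cmp L \<alpha> \<gamma>)) :: ('v,'a,'r) fa)
                (fa_mul (kp_s L (cmp L \<beta> \<gamma>)) (kp_ss L (cmp L \<beta> \<gamma>))))"

end

theory Submission
  imports Defs
begin

text \<open>
  (a) If \<open>x \<notin> Z(\<alpha>)\<close>, its prefix \<open>\<mu>\<close> of degree \<open>d(\<alpha>)\<close> differs from \<open>\<alpha>\<close>, and (KP3) gives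
  \<open>s\<^sub>\<mu>\<^sup>* s\<^sub>\<alpha> = 0\<close>; symmetrically for \<open>\<beta>\<close>. If \<open>x \<in> Z(\<alpha>) \<inter> Z(\<beta>)\<close> but the two shifts of \<open>x\<close>
  differ, then for some \<open>N\<close> the segments \<open>\<mu> = x(d(\<alpha>), d(\<alpha>)+N)\<close> and \<open>\<nu> = x(d(\<beta>), d(\<beta>)+N)\<close>
  differ, and \<open>s\<^sub>\<alpha>\<^sub>\<mu>\<^sup>* s\<^sub>\<alpha> s\<^sub>\<beta>\<^sup>* s\<^sub>\<beta>\<^sub>\<nu> = s\<^sub>\<mu>\<^sup>* s\<^sub>\<nu> = 0\<close>.

  (b) Regularity makes \<open>x\<close> an interior point of \<open>F\<^sub>\<alpha>\<^sub>,\<^sub>\<beta>\<close>, so a cylinder \<open>Z(x(0,n))\<close> lies in it;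
  take \<open>\<gamma> = x(d(\<alpha>), d(\<alpha>)+n)\<close>. On \<open>F\<^sub>\<alpha>\<^sub>,\<^sub>\<beta>\<close>
  the two shifts agree, which gives \<open>Z(\<alpha>\<gamma>\<delta>) = Z(\<beta>\<gamma>\<delta>)\<close> for all \<open>\<delta>\<close>; and paths with equal cylinders
  have equal range projections \<open>s\<^sub>\<lambda> s\<^sub>\<lambda>\<^sup>*\<close>, since (KP4) expands both as the same sum over
  the paths of a large common degree whose cylinders lie in that cylinder.
\<close>

section \<open>Factorisation in k-graphs\<close>

locale k_graph =
  fixes L :: "('v,'a,'k::finite) kgraph"
  assumes kgraph: "kgraph L"
begin

lemma rg_sr_Obj: "l \<in> Mor L \<Longrightarrow> rg L l \<in> Obj L \<and> sr L l \<in> Obj L"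
  using kgraph unfolding kgraph_def by blast

lemma idt_props:
  "v \<in> Obj L \<Longrightarrow> idt L v \<in> Mor L \<and> rg L (idt L v) = v \<and> sr L (idt L v) = v \<and> dg L (idt L v) = 0"
  using kgraph unfolding kgraph_def by blast

lemma cmp_props:
  "l \<in> Mor L \<Longrightarrow> m \<in> Mor L \<Longrightarrow> sr L l = rg L m \<Longrightarrow>
   cmp L l m \<in> Mor L \<and> rg L (cmp L l m) = rg L l \<and> sr L (cmp L l m) = sr L m
   \<and> dg L (cmp L l m) = dg L l + dg L m"
  using kgraph unfolding kgraph_def by blast

lemma cmp_idt_left: "l \<in> Mor L \<Longrightarrow> cmp L (idt L (rg L l)) l = l"
  using kgraph unfolding kgraph_def by blast

lemma cmp_idt_right: "l \<in> Mor L \<Longrightarrow> cmp L l (idt L (sr L l)) = l"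
  using kgraph unfolding kgraph_def by blast

lemma cmp_assoc:
  "l \<in> Mor L \<Longrightarrow> m \<in> Mor L \<Longrightarrow> n \<in> Mor L \<Longrightarrow> sr L l = rg L m \<Longrightarrow> sr L m = rg L n \<Longrightarrow>
   cmp L (cmp L l m) n = cmp L l (cmp L m n)"
  using kgraph unfolding kgraph_def by blast

lemma unique_factorisation:
  "l \<in> Mor L \<Longrightarrow> dg L l = m + n \<Longrightarrow>
   \<exists>!p. fst p \<in> Mor L \<and> snd p \<in> Mor L \<and> sr L (fst p) = rg L (snd p)
        \<and> dg L (fst p) = m \<and> dg L (snd p) = n \<and> l = cmp L (fst p) (snd p)"
  using kgraph unfolding kgraph_def by blast

lemma cmp_factors_unique:
  assumes "a \<in> Mor L" "b \<in> Mor L" "a' \<in> Mor L" "b' \<in> Mor L"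
    and "sr L a = rg L b" "sr L a' = rg L b'"
    and "cmp L a b = cmp L a' b'" "dg L a = dg L a'"
  shows "a = a' \<and> b = b'"
proof -
  have ab: "cmp L a b \<in> Mor L" "dg L (cmp L a b) = dg L a + dg L b"
    using cmp_props[OF assms(1,2,5)] by auto
  have "dg L (cmp L a' b') = dg L a' + dg L b'"
    using cmp_props[OF assms(3,4,6)] by auto
  then have "dg L b = dg L b'"
    using assms(7,8) ab(2) by (metis add_left_imp_eq)
  then have "(a, b) = (a', b')"
    using unique_factorisation[OF ab] assms by (smt (verit) fst_conv snd_conv)
  then show ?thesis by simp
qed

lemma dg_0_eq_idt:
  assumes "l \<in> Mor L" "dg L l = 0"
  shows "l = idt L (rg L l)" "sr L l = rg L l"
proof -
  have v: "rg L l \<in> Obj L" "sr L l \<in> Obj L" using rg_sr_Obj[OF assms(1)] by auto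
  have "idt L (rg L l) = l \<and> l = idt L (sr L l)"
    using cmp_factors_unique[of "idt L (rg L l)" l l "idt L (sr L l)"] idt_props[OF v(1)]
      idt_props[OF v(2)] cmp_idt_left[OF assms(1)] cmp_idt_right[OF assms(1)] assms
    by simp
  then show "l = idt L (rg L l)" "sr L l = rg L l"
    using idt_props[OF v(1)] idt_props[OF v(2)] by metis+
qed

lemma cmp_dg_0_left:
  "l \<in> Mor L \<Longrightarrow> dg L l = 0 \<Longrightarrow> m \<in> Mor L \<Longrightarrow> sr L l = rg L m \<Longrightarrow> cmp L l m = m"
  using dg_0_eq_idt cmp_idt_left by metis

lemma cmp_dg_0_right:
  "m \<in> Mor L \<Longrightarrow> dg L m = 0 \<Longrightarrow> l \<in> Mor L \<Longrightarrow> sr L l = rg L m \<Longrightarrow> cmp L l m = l"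
  using dg_0_eq_idt cmp_idt_right by metis

lemma factorisation_exists:
  assumes "l \<in> Mor L" "m \<le> dg L l"
  obtains a b where "a \<in> Mor L" "b \<in> Mor L" "sr L a = rg L b" "dg L a = m"
    "dg L b = dg L l - m" "l = cmp L a b"
proof -
  have "dg L l = m + (dg L l - m)"
    using assms(2) by (simp add: le_fun_def fun_eq_iff)
  from unique_factorisation[OF assms(1) this] show ?thesis using that by blast
qed

end

definition factor :: "('v,'a,'k) kgraph \<Rightarrow> 'a \<Rightarrow> ('k \<Rightarrow> nat) \<Rightarrow> 'a \<times> 'a" where
  "factor L l m = (SOME p. fst p \<in> Mor L \<and> snd p \<in> Mor L \<and> sr L (fst p) = rg L (snd p)
                         \<and> dg L (fst p) = m \<and> l = cmp L (fst p) (snd p))"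

definition segment :: "('v,'a,'k) kgraph \<Rightarrow> 'a \<Rightarrow> ('k \<Rightarrow> nat) \<Rightarrow> ('k \<Rightarrow> nat) \<Rightarrow> 'a" where
  "segment L l p q = fst (factor L (snd (factor L l p)) (q - p))"

context k_graph
begin

lemma factor_props:
  assumes "l \<in> Mor L" "m \<le> dg L l"
  shows "fst (factor L l m) \<in> Mor L" "snd (factor L l m) \<in> Mor L"
    "sr L (fst (factor L l m)) = rg L (snd (factor L l m))" "dg L (fst (factor L l m)) = m"
    "dg L (snd (factor L l m)) = dg L l - m" "l = cmp L (fst (factor L l m)) (snd (factor L l m))"
proof -
  obtain a b where ab: "a \<in> Mor L" "b \<in> Mor L" "sr L a = rg L b" "dg L a = m"
    "dg L b = dg L l - m" "l = cmp L a b"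
    using factorisation_exists[OF assms] .
  then have "\<exists>p. fst p \<in> Mor L \<and> snd p \<in> Mor L \<and> sr L (fst p) = rg L (snd p)
      \<and> dg L (fst p) = m \<and> l = cmp L (fst p) (snd p)"
    by (intro exI[of _ "(a, b)"]) simp
  then have spec: "fst (factor L l m) \<in> Mor L \<and> snd (factor L l m) \<in> Mor L
      \<and> sr L (fst (factor L l m)) = rg L (snd (factor L l m))
      \<and> dg L (fst (factor L l m)) = m \<and> l = cmp L (fst (factor L l m)) (snd (factor L l m))"
    unfolding factor_def by (rule someI_ex)
  then have "a = fst (factor L l m) \<and> b = snd (factor L l m)"
    using cmp_factors_unique[OF ab(1,2) _ _ ab(3)] ab(4,6) by metis
  then have "factor L l m = (a, b)" by simp
  then show "fst (factor L l m) \<in> Mor L" "snd (factor L l m) \<in> Mor L"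
    "sr L (fst (factor L l m)) = rg L (snd (factor L l m))" "dg L (fst (factor L l m)) = m"
    "dg L (snd (factor L l m)) = dg L l - m" "l = cmp L (fst (factor L l m)) (snd (factor L l m))"
    using ab by simp_all
qed

lemma factor_cmp:
  assumes "a \<in> Mor L" "b \<in> Mor L" "sr L a = rg L b"
  shows "factor L (cmp L a b) (dg L a) = (a, b)"
proof -
  have ab: "cmp L a b \<in> Mor L" "dg L a \<le> dg L (cmp L a b)"
    using cmp_props[OF assms] by (auto simp: le_fun_def)
  have "a = fst (factor L (cmp L a b) (dg L a)) \<and> b = snd (factor L (cmp L a b) (dg L a))"
    using cmp_factors_unique[OF assms(1,2) factor_props(1,2)[OF ab] assms(3) factor_props(3)[OF ab]]
      factor_props(4,6)[OF ab] by metis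
  then show ?thesis by (metis prod.collapse)
qed

lemma segment_props:
  assumes "l \<in> Mor L" "p \<le> q" "q \<le> dg L l"
  shows "segment L l p q \<in> Mor L \<and> dg L (segment L l p q) = q - p"
proof -
  have p: "p \<le> dg L l" using assms order_trans by blast
  have "q - p \<le> dg L (snd (factor L l p))"
    using assms factor_props(5)[OF assms(1) p] by (auto simp: le_fun_def intro: diff_le_mono)
  then show ?thesis
    unfolding segment_def using factor_props[OF factor_props(2)[OF assms(1) p]] by simp
qed

lemma segment_cmp_right:
  assumes "l \<in> Mor L" "e \<in> Mor L" "sr L l = rg L e" "p \<le> q" "q \<le> dg L l"
  shows "segment L (cmp L l e) p q = segment L l p q"
proof -
  have p: "p \<le> dg L l" using assms order_trans by blast
  define a b where "a = fst (factor L l p)" and "b = snd (factor L l p)"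
  have ab: "a \<in> Mor L" "b \<in> Mor L" "sr L a = rg L b" "dg L b = dg L l - p" "l = cmp L a b"
    using factor_props[OF assms(1) p] unfolding a_def b_def by auto
  have b: "sr L b = sr L l" using ab cmp_props by metis
  have "cmp L l e = cmp L a (cmp L b e)" using ab assms b cmp_assoc by metis
  then have lep: "factor L (cmp L l e) p = (a, cmp L b e)"
    using factor_cmp[OF ab(1)] factor_props(4)[OF assms(1) p] cmp_props[OF ab(2) assms(2)] ab b assms(3)
    unfolding a_def by simp
  have q: "q - p \<le> dg L b" using assms ab by (auto simp: le_fun_def intro: diff_le_mono)
  define c d where "c = fst (factor L b (q - p))" and "d = snd (factor L b (q - p))"
  have cd: "c \<in> Mor L" "d \<in> Mor L" "sr L c = rg L d" "dg L c = q - p" "b = cmp L c d"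
    using factor_props[OF ab(2) q] unfolding c_def d_def by auto
  have d: "sr L d = sr L b" using cd cmp_props by metis
  have "cmp L b e = cmp L c (cmp L d e)" using cd assms b d cmp_assoc by metis
  then have "factor L (cmp L b e) (q - p) = (c, cmp L d e)"
    using factor_cmp[OF cd(1)] cmp_props[OF cd(2) assms(2)] cd b d assms(3) by simp
  then show ?thesis unfolding segment_def using lep c_def b_def by simp
qed

lemma segment_split:
  assumes "l \<in> Mor L" "p \<le> q" "q \<le> t" "t \<le> dg L l"
  shows "sr L (segment L l p q) = rg L (segment L l q t)"
    "segment L l p t = cmp L (segment L l p q) (segment L l q t)"
proof -
  have p: "p \<le> dg L l" and q: "q \<le> dg L l" using assms order_trans by blast+
  define a b where "a = fst (factor L l p)" and "b = snd (factor L l p)"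
  have ab: "a \<in> Mor L" "b \<in> Mor L" "sr L a = rg L b" "dg L a = p" "dg L b = dg L l - p" "l = cmp L a b"
    using factor_props[OF assms(1) p] unfolding a_def b_def by auto
  have qb: "q - p \<le> dg L b" using q ab(5) by (auto simp: le_fun_def intro: diff_le_mono)
  define c e where "c = fst (factor L b (q - p))" and "e = snd (factor L b (q - p))"
  have ce: "c \<in> Mor L" "e \<in> Mor L" "sr L c = rg L e" "dg L c = q - p"
    "dg L e = dg L b - (q - p)" "b = cmp L c e"
    using factor_props[OF ab(2) qb] unfolding c_def e_def by auto
  have pq: "segment L l p q = c" unfolding segment_def a_def b_def c_def by simp
  have c: "rg L c = rg L b" using ce cmp_props by metis
  have ac: "cmp L a c \<in> Mor L" "sr L (cmp L a c) = sr L c" "dg L (cmp L a c) = q"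
    using cmp_props[OF ab(1) ce(1)] ab ce c assms(2) by (auto simp: le_fun_def fun_eq_iff)
  have "l = cmp L (cmp L a c) e" using ab ce c cmp_assoc by metis
  then have "factor L l q = (cmp L a c, e)" using factor_cmp[OF ac(1) ce(2)] ac ce by simp
  then have qt: "segment L l q t = fst (factor L e (t - q))" unfolding segment_def by simp
  have te: "t - q \<le> dg L e" using assms ab ce by (auto simp: le_fun_def intro: diff_le_mono)
  define f g where "f = fst (factor L e (t - q))" and "g = snd (factor L e (t - q))"
  have fg: "f \<in> Mor L" "g \<in> Mor L" "sr L f = rg L g" "dg L f = t - q" "e = cmp L f g"
    using factor_props[OF ce(2) te] unfolding f_def g_def by auto
  have f: "rg L f = rg L e" using fg cmp_props by metis
  have cf: "cmp L c f \<in> Mor L" "dg L (cmp L c f) = t - p" "sr L (cmp L c f) = sr L f"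
    using cmp_props[OF ce(1) fg(1)] ce fg f assms by (auto simp: le_fun_def fun_eq_iff)
  have "b = cmp L (cmp L c f) g" using ce fg f cmp_assoc by metis
  then have "factor L b (t - p) = (cmp L c f, g)" using factor_cmp[OF cf(1) fg(2)] cf fg by simp
  then have "segment L l p t = cmp L c f" unfolding segment_def b_def by simp
  then show "sr L (segment L l p q) = rg L (segment L l q t)"
    "segment L l p t = cmp L (segment L l p q) (segment L l q t)"
    using pq qt f_def ce f by simp_all
qed

lemma segment_initial:
  assumes "l \<in> Mor L" "e \<in> Mor L" "sr L l = rg L e"
  shows "segment L (cmp L l e) 0 (dg L l) = l"
proof -
  have le: "cmp L l e \<in> Mor L" "rg L (cmp L l e) = rg L l" using cmp_props[OF assms] by auto
  have i: "idt L (rg L l) \<in> Mor L" "sr L (idt L (rg L l)) = rg L l" "dg L (idt L (rg L l)) = 0"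
    using idt_props rg_sr_Obj assms(1) by auto
  have "factor L (cmp L l e) 0 = (idt L (rg L l), cmp L l e)"
    using factor_cmp[OF i(1) le(1)] i le cmp_idt_left[OF le(1)] by simp
  then show ?thesis unfolding segment_def using factor_cmp[OF assms] by simp
qed

end

section \<open>Infinite paths and cylinder sets\<close>

context k_graph
begin

lemma inf_path_Mor: "y \<in> inf_paths L \<Longrightarrow> p \<le> q \<Longrightarrow> y p q \<in> Mor L \<and> dg L (y p q) = q - p"
  unfolding inf_paths_def by blast

lemma inf_path_cmp:
  "y \<in> inf_paths L \<Longrightarrow> p \<le> q \<Longrightarrow> q \<le> t \<Longrightarrow> sr L (y p q) = rg L (y q t) \<and> y p t = cmp L (y p q) (y q t)"
  unfolding inf_paths_def by blast

lemma inf_path_in_cyl: "y \<in> inf_paths L \<Longrightarrow> y \<in> cyl L (y 0 n)"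
  unfolding cyl_def using inf_path_Mor[of y 0 n] by (simp add: le_fun_def)

lemma cyl_prefix_cmp:
  assumes "x \<in> cyl L \<mu>"
  shows "sr L \<mu> = rg L (x (dg L \<mu>) (dg L \<mu> + n))"
    "x 0 (dg L \<mu> + n) = cmp L \<mu> (x (dg L \<mu>) (dg L \<mu> + n))"
  using inf_path_cmp[of x 0 "dg L \<mu>" "dg L \<mu> + n"] assms unfolding cyl_def
  by (auto simp: le_fun_def)

lemma cyl_cmpD:
  assumes "y \<in> cyl L (cmp L a b)" "a \<in> Mor L" "b \<in> Mor L" "sr L a = rg L b"
  shows "y \<in> cyl L a" "y (dg L a) (dg L a + dg L b) = b"
proof -
  have y: "y \<in> inf_paths L" "y 0 (dg L a + dg L b) = cmp L a b"
    using assms cmp_props[OF assms(2-4)] unfolding cyl_def by auto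
  have le: "0 \<le> dg L a" "dg L a \<le> dg L a + dg L b" by (auto simp: le_fun_def)
  have "y 0 (dg L a) = a \<and> y (dg L a) (dg L a + dg L b) = b"
  proof (rule cmp_factors_unique)
    show "y 0 (dg L a) \<in> Mor L" "y (dg L a) (dg L a + dg L b) \<in> Mor L" "dg L (y 0 (dg L a)) = dg L a"
      using inf_path_Mor[OF y(1) le(1)] inf_path_Mor[OF y(1) le(2)] by simp_all
    show "sr L (y 0 (dg L a)) = rg L (y (dg L a) (dg L a + dg L b))"
      "cmp L (y 0 (dg L a)) (y (dg L a) (dg L a + dg L b)) = cmp L a b"
      using inf_path_cmp[OF y(1) le] y(2) by simp_all
  qed (use assms in simp_all)
  then show "y \<in> cyl L a" "y (dg L a) (dg L a + dg L b) = b"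
    using y(1) unfolding cyl_def by auto
qed

lemma cyl_cmpI:
  assumes "y \<in> cyl L a" "b \<in> Mor L" "y (dg L a) (dg L a + dg L b) = b"
  shows "y \<in> cyl L (cmp L a b)"
proof -
  have y: "y \<in> inf_paths L" "y 0 (dg L a) = a" using assms(1) unfolding cyl_def by auto
  have a: "a \<in> Mor L" using inf_path_Mor[OF y(1), of 0 "dg L a"] y(2) by (simp add: le_fun_def)
  have "sr L a = rg L b" "y 0 (dg L a + dg L b) = cmp L a b"
    using cyl_prefix_cmp[OF assms(1), of "dg L b"] assms(3) by simp_all
  then show ?thesis
    using y(1) cmp_props[OF a assms(2)] unfolding cyl_def by simp
qed

lemma cyl_prefix_subset:
  assumes "x \<in> inf_paths L" "m \<le> n"
  shows "cyl L (x 0 n) \<subseteq> cyl L (x 0 m)"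
proof
  fix y assume y: "y \<in> cyl L (x 0 n)"
  have "0 \<le> m" by (simp add: le_fun_def)
  note x = inf_path_cmp[OF assms(1) this assms(2)] inf_path_Mor[OF assms(1) this]
    inf_path_Mor[OF assms(1) assms(2)]
  show "y \<in> cyl L (x 0 m)"
    using cyl_cmpD(1)[of y "x 0 m" "x m n"] x y by simp
qed

end

locale k_graph_no_sources = k_graph L for L :: "('v,'a,'k::finite) kgraph" +
  assumes no_sources: "row_finite_no_sources L"
begin

lemma extension_chain:
  assumes "r \<in> Mor L"
  obtains ch :: "nat \<Rightarrow> 'a" where "ch 0 = r" "\<And>j. ch j \<in> Mor L \<and> dg L (ch j) = dg L r + (\<lambda>_. j)"
    "\<And>j j'. j \<le> j' \<Longrightarrow> \<exists>e\<in>Mor L. rg L e = sr L (ch j) \<and> ch j' = cmp L (ch j) e"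
proof -
  define ext where "ext l = cmp L l (SOME e. e \<in> vLn L (sr L l) 1)" for l
  have ext: "ext l \<in> Mor L \<and> dg L (ext l) = dg L l + 1 \<and> (\<exists>e\<in>Mor L. rg L e = sr L l \<and> ext l = cmp L l e)"
    if "l \<in> Mor L" for l
  proof -
    have "vLn L (sr L l) 1 \<noteq> {}"
      using no_sources rg_sr_Obj[OF that] unfolding row_finite_no_sources_def by auto
    then have "(SOME e. e \<in> vLn L (sr L l) 1) \<in> vLn L (sr L l) 1"
      by (simp add: some_in_eq)
    then obtain e where e: "e \<in> Mor L" "rg L e = sr L l" "dg L e = 1" "ext l = cmp L l e"
      unfolding ext_def vLn_def by blast
    then show ?thesis using cmp_props[OF that e(1)] by auto
  qed
  define ch where "ch j = (ext ^^ j) r" for j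
  have ch: "ch j \<in> Mor L \<and> dg L (ch j) = dg L r + (\<lambda>_. j)" for j
  proof (induction j)
    case 0
    then show ?case using assms by (simp add: ch_def fun_eq_iff)
  next
    case (Suc j)
    then show ?case using ext[of "ch j"] by (simp add: ch_def fun_eq_iff)
  qed
  have "\<exists>e\<in>Mor L. rg L e = sr L (ch j) \<and> ch j' = cmp L (ch j) e" if "j \<le> j'" for j j'
    using that
  proof (induction j' rule: dec_induct)
    case base
    have "sr L (ch j) \<in> Obj L" using rg_sr_Obj ch by blast
    then show ?case using idt_props cmp_idt_right ch by metis
  next
    case (step n)
    then obtain e where e: "e \<in> Mor L" "rg L e = sr L (ch j)" "ch n = cmp L (ch j) e" by blast
    obtain e' where e': "e' \<in> Mor L" "rg L e' = sr L (ch n)" "ext (ch n) = cmp L (ch n) e'"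
      using ext ch by blast
    have n: "sr L (ch n) = sr L e" using e cmp_props ch by metis
    have "ch (Suc n) = cmp L (ch j) (cmp L e e')"
      using e e' n cmp_assoc[of "ch j" e e'] ch[of j] by (simp add: ch_def)
    then show ?case using cmp_props[OF e(1) e'(1)] e e' n by auto
  qed
  moreover have "ch 0 = r" by (simp add: ch_def)
  ultimately show ?thesis using that ch by blast
qed

text \<open>An infinite path through \<open>r\<close> is read off from ever longer extensions of \<open>r\<close>: the
  segment between degrees \<open>p\<close> and \<open>q\<close> is taken from the extension indexed by \<open>\<Sum>i. q i\<close>,
  whose degree dominates \<open>q\<close>.\<close>
lemma cyl_nonempty:
  assumes "r \<in> Mor L"
  shows "cyl L r \<noteq> {}"
proof -
  obtain ch where ch0: "ch 0 = r" and ch: "\<And>j. ch j \<in> Mor L \<and> dg L (ch j) = dg L r + (\<lambda>_. j)"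
    and ext: "\<And>j j'. j \<le> j' \<Longrightarrow> \<exists>e\<in>Mor L. rg L e = sr L (ch j) \<and> ch j' = cmp L (ch j) e"
    using extension_chain[OF assms] by blast
  define J where "J q = (\<Sum>i\<in>UNIV. q i)" for q :: "'k \<Rightarrow> nat"
  have J: "q \<le> dg L (ch (J q))" for q
  proof -
    have "q i \<le> J q" for i unfolding J_def by (rule member_le_sum) auto
    then show ?thesis using ch[of "J q"] by (simp add: le_fun_def trans_le_add2)
  qed
  have J_mono: "q \<le> t \<Longrightarrow> J q \<le> J t" for q t
    unfolding J_def le_fun_def by (intro sum_mono) auto
  have stable: "segment L (ch j') p q = segment L (ch j) p q"
    if jj: "j \<le> j'" and pq: "p \<le> q" "q \<le> dg L (ch j)" for j j' p q
  proof -
    obtain e where "e \<in> Mor L" "rg L e = sr L (ch j)" "ch j' = cmp L (ch j) e"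
      using ext[OF jj] by blast
    then show ?thesis using segment_cmp_right[of "ch j" e p q] ch pq by simp
  qed
  define y where "y p q = (if p \<le> q then segment L (ch (J q)) p q else undefined)" for p q
  have y_Mor: "y p q \<in> Mor L \<and> dg L (y p q) = q - p" if "p \<le> q" for p q
    unfolding y_def using segment_props[of "ch (J q)" p q] ch that J by simp
  have y_cmp: "sr L (y p q) = rg L (y q t) \<and> y p t = cmp L (y p q) (y q t)"
    if "p \<le> q" "q \<le> t" for p q t
  proof -
    have "p \<le> t" using that order_trans by blast
    have "y p q = segment L (ch (J t)) p q"
      unfolding y_def using that stable[OF J_mono[OF that(2)] that(1) J] by simp
    moreover have "y q t = segment L (ch (J t)) q t" "y p t = segment L (ch (J t)) p t"
      unfolding y_def using that \<open>p \<le> t\<close> by auto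
    ultimately show ?thesis using segment_split[of "ch (J t)" p q t] ch that J by simp
  qed
  have "y p p = idt L (rg L (y p p))" for p
    using y_Mor[of p p] dg_0_eq_idt(1)[of "y p p"] by simp
  then have "y \<in> inf_paths L"
    unfolding inf_paths_def using y_Mor y_cmp by (simp add: y_def)
  moreover have "y 0 (dg L r) = r"
  proof -
    obtain e where "e \<in> Mor L" "rg L e = sr L r" "ch (J (dg L r)) = cmp L r e"
      using ext[of 0 "J (dg L r)"] ch0 by auto
    then show ?thesis using segment_initial[OF assms] by (simp add: y_def le_fun_def)
  qed
  ultimately show ?thesis unfolding cyl_def by blast
qed

end

section \<open>The free algebra and the Kumjian-Pask congruence\<close>

lemma fa_mul_Nil: "fa_mul f g [] = f [] * g []"
  unfolding fa_mul_def by simp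

lemma fa_mul_Cons: "fa_mul f g (x # w) = f [] * g (x # w) + fa_mul (\<lambda>u. f (x # u)) g w"
  unfolding fa_mul_def by (simp add: sum.atMost_Suc_shift del: sum.atMost_Suc)

lemma fa_mul_linear_left: "fa_mul (\<lambda>u. c * f u + h u) g w = c * fa_mul f g w + fa_mul h g w"
  unfolding fa_mul_def by (simp add: algebra_simps sum.distrib sum_distrib_left)

lemma fa_mul_assoc: "fa_mul (fa_mul f g) h = fa_mul f (fa_mul g h)"
proof
  fix w show "fa_mul (fa_mul f g) h w = fa_mul f (fa_mul g h) w"
  proof (induction w arbitrary: f)
    case Nil
    then show ?case by (simp add: fa_mul_Nil)
  next
    case (Cons x w)
    have "fa_mul (fa_mul f g) h (x # w)
        = fa_mul f g [] * h (x # w) + fa_mul (\<lambda>u. f [] * g (x # u) + fa_mul (\<lambda>u. f (x # u)) g u) h w"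
      by (simp add: fa_mul_Cons)
    also have "\<dots> = f [] * g [] * h (x # w) + f [] * fa_mul (\<lambda>u. g (x # u)) h w
                    + fa_mul (fa_mul (\<lambda>u. f (x # u)) g) h w"
      by (simp add: fa_mul_linear_left fa_mul_Nil add.assoc)
    also have "\<dots> = fa_mul f (fa_mul g h) (x # w)"
      using Cons by (simp add: fa_mul_Cons fa_mul_Nil algebra_simps)
    finally show ?case .
  qed
qed

lemma fa_mul_zero_left [simp]: "fa_mul fa_zero f = fa_zero"
  unfolding fa_mul_def fa_zero_def by simp

lemma fa_mul_zero_right [simp]: "fa_mul f fa_zero = fa_zero"
  unfolding fa_mul_def fa_zero_def by simp

lemma fa_mul_one_left [simp]: "fa_mul (fa_mon []) f = f"
proof
  fix w show "fa_mul (fa_mon []) f w = f w"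
  proof (cases w)
    case (Cons x u)
    then show ?thesis by (simp add: fa_mul_Cons fa_mon_def) (simp add: fa_mul_def)
  qed (simp add: fa_mul_Nil fa_mon_def)
qed

lemma fa_mul_one_right [simp]: "fa_mul f (fa_mon []) = f"
proof
  fix w show "fa_mul f (fa_mon []) w = f w"
    by (induction w arbitrary: f) (simp_all add: fa_mul_Nil fa_mul_Cons, simp_all add: fa_mon_def)
qed

lemma fa_mul_add_left: "fa_mul (fa_add a b) c = fa_add (fa_mul a c) (fa_mul b c)"
  unfolding fa_mul_def fa_add_def by (simp add: algebra_simps sum.distrib)

lemma fa_mul_add_right: "fa_mul c (fa_add a b) = fa_add (fa_mul c a) (fa_mul c b)"
  unfolding fa_mul_def fa_add_def by (simp add: algebra_simps sum.distrib)

lemma fa_mul_diff_left: "fa_mul (fa_diff a b) c = fa_diff (fa_mul a c) (fa_mul b c)"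
  unfolding fa_mul_def fa_diff_def by (simp add: algebra_simps sum_subtractf)

lemma fa_mul_diff_right: "fa_mul c (fa_diff a b) = fa_diff (fa_mul c a) (fa_mul c b)"
  unfolding fa_mul_def fa_diff_def by (simp add: algebra_simps sum_subtractf)

lemma fa_mul_uminus_left: "fa_mul (\<lambda>u. - a u) c = (\<lambda>w. - fa_mul a c w)"
  unfolding fa_mul_def by (simp add: sum_negf)

lemma fa_mul_sum_left: "fa_mul (fa_sum A F) c = fa_sum A (\<lambda>b. fa_mul (F b) c)"
  unfolding fa_mul_def fa_sum_def by (simp add: sum_distrib_right fun_eq_iff) (intro allI sum.swap)

lemma fa_mul_sum_right: "fa_mul c (fa_sum A F) = fa_sum A (\<lambda>b. fa_mul c (F b))"
  unfolding fa_mul_def fa_sum_def by (simp add: sum_distrib_left fun_eq_iff) (intro allI sum.swap)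

lemma fa_prod_Cons: "fa_prod (a # as) = fa_mul a (fa_prod as)"
  unfolding fa_prod_def by simp

lemma fa_prod_append: "fa_prod (as @ bs) = fa_mul (fa_prod as) (fa_prod bs)"
  by (induction as) (simp_all add: fa_prod_def fa_mul_assoc)

lemma fa_prod_singleton [simp]: "fa_prod [a] = a"
  unfolding fa_prod_def by simp

lemma fa_prod_pair [simp]: "fa_prod [a, b] = fa_mul a b"
  unfolding fa_prod_def by simp

lemma fa_fin_mon [simp]: "fa_fin (fa_mon w)"
  unfolding fa_fin_def fa_mon_def by simp

lemma fa_fin_uminus: "fa_fin a \<Longrightarrow> fa_fin (\<lambda>u. - a u)"
  unfolding fa_fin_def by simp

lemma fa_fin_mul [simp]:
  assumes "fa_fin a" "fa_fin b"
  shows "fa_fin (fa_mul a b)"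
proof -
  have "{w. fa_mul a b w \<noteq> 0} \<subseteq> (\<lambda>(u, v). u @ v) ` ({u. a u \<noteq> 0} \<times> {v. b v \<noteq> 0})"
  proof
    fix w assume "w \<in> {w. fa_mul a b w \<noteq> 0}"
    then obtain i where "a (take i w) * b (drop i w) \<noteq> 0"
      unfolding fa_mul_def by (auto elim: sum.not_neutral_contains_not_neutral)
    then show "w \<in> (\<lambda>(u, v). u @ v) ` ({u. a u \<noteq> 0} \<times> {v. b v \<noteq> 0})"
      by (intro image_eqI[of _ _ "(take i w, drop i w)"]) auto
  qed
  moreover have "finite ((\<lambda>(u, v). u @ v) ` ({u. a u \<noteq> 0} \<times> {v. b v \<noteq> 0}))"
    using assms unfolding fa_fin_def by simp
  ultimately show ?thesis unfolding fa_fin_def by (rule finite_subset)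
qed

lemma fa_fin_prod: "list_all fa_fin as \<Longrightarrow> fa_fin (fa_prod as)"
  by (induction as) (simp_all add: fa_prod_def)

lemma kp_ideal_mul_left: "x \<in> kp_ideal L \<Longrightarrow> fa_fin c \<Longrightarrow> fa_mul c x \<in> kp_ideal L"
proof (induction x rule: kp_ideal.induct)
  case (kp_ideal_gen r a b)
  have "fa_mul c (fa_mul (fa_mul a r) b) = fa_mul (fa_mul (fa_mul c a) r) b"
    by (simp add: fa_mul_assoc)
  then show ?case
    using kp_ideal.kp_ideal_gen[OF kp_ideal_gen.hyps(1) _ kp_ideal_gen.hyps(3)] kp_ideal_gen by simp
qed (simp_all add: fa_mul_add_right kp_ideal.intros)

lemma kp_ideal_mul_right: "x \<in> kp_ideal L \<Longrightarrow> fa_fin c \<Longrightarrow> fa_mul x c \<in> kp_ideal L"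
proof (induction x rule: kp_ideal.induct)
  case (kp_ideal_gen r a b)
  have "fa_mul (fa_mul (fa_mul a r) b) c = fa_mul (fa_mul a r) (fa_mul b c)"
    by (simp add: fa_mul_assoc)
  then show ?case
    using kp_ideal.kp_ideal_gen[OF kp_ideal_gen.hyps(1,2)] kp_ideal_gen by simp
qed (simp_all add: fa_mul_add_left kp_ideal.intros)

lemma kp_ideal_uminus: "x \<in> kp_ideal L \<Longrightarrow> (\<lambda>u. - x u) \<in> kp_ideal L"
  using kp_ideal_mul_left[of x L "\<lambda>u. - fa_mon [] u"]
  by (simp add: fa_fin_uminus fa_mul_uminus_left)

lemma kp_ideal_sum:
  "finite A \<Longrightarrow> (\<And>b. b \<in> A \<Longrightarrow> H b \<in> kp_ideal L) \<Longrightarrow> fa_sum A H \<in> kp_ideal L"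
proof (induction A rule: finite_induct)
  case empty
  then show ?case using kp_ideal.kp_ideal_zero by (simp add: fa_sum_def fa_zero_def)
next
  case (insert x A)
  then have "fa_sum (insert x A) H = fa_add (H x) (fa_sum A H)"
    by (simp add: fa_sum_def fa_add_def fun_eq_iff)
  then show ?case using insert by (simp add: kp_ideal.kp_ideal_add)
qed

lemma kp_eq_rel: "fa_diff a b \<in> kp_rels L \<Longrightarrow> kp_eq L a b"
  using kp_ideal.kp_ideal_gen[of "fa_diff a b" L "fa_mon []" "fa_mon []"] unfolding kp_eq_def by simp

lemma kp_eq_sym: "kp_eq L a b \<Longrightarrow> kp_eq L b a"
  unfolding kp_eq_def using kp_ideal_uminus[of "fa_diff a b" L] by (simp add: fa_diff_def)

lemma kp_eq_trans [trans]: "kp_eq L a b \<Longrightarrow> kp_eq L b c \<Longrightarrow> kp_eq L a c"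
  unfolding kp_eq_def using kp_ideal.kp_ideal_add[of "fa_diff a b" L "fa_diff b c"]
  by (simp add: fa_diff_def fa_add_def)

lemma kp_eq_mul_left: "kp_eq L a b \<Longrightarrow> fa_fin c \<Longrightarrow> kp_eq L (fa_mul c a) (fa_mul c b)"
  unfolding kp_eq_def fa_mul_diff_right[symmetric] by (rule kp_ideal_mul_left)

lemma kp_eq_mul_right: "kp_eq L a b \<Longrightarrow> fa_fin c \<Longrightarrow> kp_eq L (fa_mul a c) (fa_mul b c)"
  unfolding kp_eq_def fa_mul_diff_left[symmetric] by (rule kp_ideal_mul_right)

lemma kp_eq_mul:
  "kp_eq L a a' \<Longrightarrow> kp_eq L b b' \<Longrightarrow> fa_fin b \<Longrightarrow> fa_fin a' \<Longrightarrow> kp_eq L (fa_mul a b) (fa_mul a' b')"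
  using kp_eq_trans[OF kp_eq_mul_right kp_eq_mul_left] by blast

lemma kp_eq_sum:
  assumes "finite A" "\<And>b. b \<in> A \<Longrightarrow> kp_eq L (F b) (G b)"
  shows "kp_eq L (fa_sum A F) (fa_sum A G)"
proof -
  have "fa_sum A (\<lambda>b. fa_diff (F b) (G b)) \<in> kp_ideal L"
    using assms unfolding kp_eq_def by (intro kp_ideal_sum)
  moreover have "fa_sum A (\<lambda>b. fa_diff (F b) (G b)) = fa_diff (fa_sum A F) (fa_sum A G)"
    by (simp add: fa_sum_def fa_diff_def sum_subtractf)
  ultimately show ?thesis unfolding kp_eq_def by simp
qed

lemma kp_eq_prod_infix:
  assumes "kp_eq L (fa_prod bs) (fa_prod bs')" "list_all fa_fin as" "list_all fa_fin cs"
  shows "kp_eq L (fa_prod (as @ bs @ cs)) (fa_prod (as @ bs' @ cs))"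
  unfolding fa_prod_append
  by (intro kp_eq_mul_left kp_eq_mul_right assms fa_fin_prod)

lemma kp_eq_prod_zero_infix:
  assumes "kp_eq L (fa_prod bs) fa_zero" "list_all fa_fin as" "list_all fa_fin cs"
  shows "kp_eq L (fa_prod (as @ bs @ cs)) fa_zero"
  using kp_eq_prod_infix[of L bs "[fa_zero]", OF _ assms(2,3)] assms(1)
  by (simp add: fa_prod_append fa_prod_Cons)

section \<open>The Kumjian-Pask relations, degree 0 included\<close>

lemma kp_s_dg_0: "dg L l = 0 \<Longrightarrow> kp_s L l = kp_p L (rg L l)"
  unfolding kp_s_def kp_p_def by simp

lemma kp_ss_dg_0: "dg L l = 0 \<Longrightarrow> kp_ss L l = kp_p L (rg L l)"
  unfolding kp_ss_def kp_p_def by simp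

lemma fa_fin_kp [simp]: "fa_fin (kp_p L v)" "fa_fin (kp_s L l)" "fa_fin (kp_ss L l)"
  unfolding kp_p_def kp_s_def kp_ss_def by simp_all

lemma kp_KP1:
  "v \<in> Obj L \<Longrightarrow> w \<in> Obj L \<Longrightarrow>
   kp_eq L (fa_mul (kp_p L v) (kp_p L w)) (if v = w then kp_p L v else fa_zero)"
  by (rule kp_eq_rel, unfold kp_rels_def, rule UnI1, rule UnI1, rule UnI1, rule UnI1, rule UnI1, rule UnI1, rule UnI1, rule UnI1) blast

lemma kp_KP2_s:
  "l \<in> Mor L \<Longrightarrow> m \<in> Mor L \<Longrightarrow> rg L m = sr L l \<Longrightarrow> dg L l \<noteq> 0 \<Longrightarrow> dg L m \<noteq> 0 \<Longrightarrow>
   kp_eq L (fa_mul (kp_s L l) (kp_s L m)) (kp_s L (cmp L l m))"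
  by (rule kp_eq_rel, unfold kp_rels_def, rule UnI1, rule UnI1, rule UnI1, rule UnI1, rule UnI1, rule UnI1, rule UnI1, rule UnI2) blast

lemma kp_KP2_ss:
  "l \<in> Mor L \<Longrightarrow> m \<in> Mor L \<Longrightarrow> rg L m = sr L l \<Longrightarrow> dg L l \<noteq> 0 \<Longrightarrow> dg L m \<noteq> 0 \<Longrightarrow>
   kp_eq L (fa_mul (kp_ss L m) (kp_ss L l)) (kp_ss L (cmp L l m))"
  by (rule kp_eq_rel, unfold kp_rels_def, rule UnI1, rule UnI1, rule UnI1, rule UnI1, rule UnI1, rule UnI1, rule UnI2) blast

lemma kp_KP2_p_s:
  "l \<in> Mor L \<Longrightarrow> dg L l \<noteq> 0 \<Longrightarrow> kp_eq L (fa_mul (kp_p L (rg L l)) (kp_s L l)) (kp_s L l)"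
  by (rule kp_eq_rel, unfold kp_rels_def, rule UnI1, rule UnI1, rule UnI1, rule UnI1, rule UnI1, rule UnI2) blast

lemma kp_KP2_s_p:
  "l \<in> Mor L \<Longrightarrow> dg L l \<noteq> 0 \<Longrightarrow> kp_eq L (fa_mul (kp_s L l) (kp_p L (sr L l))) (kp_s L l)"
  by (rule kp_eq_rel, unfold kp_rels_def, rule UnI1, rule UnI1, rule UnI1, rule UnI1, rule UnI2) blast

lemma kp_KP2_p_ss:
  "l \<in> Mor L \<Longrightarrow> dg L l \<noteq> 0 \<Longrightarrow> kp_eq L (fa_mul (kp_p L (sr L l)) (kp_ss L l)) (kp_ss L l)"
  by (rule kp_eq_rel, unfold kp_rels_def, rule UnI1, rule UnI1, rule UnI1, rule UnI2) blast

lemma kp_KP2_ss_p: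
  "l \<in> Mor L \<Longrightarrow> dg L l \<noteq> 0 \<Longrightarrow> kp_eq L (fa_mul (kp_ss L l) (kp_p L (rg L l))) (kp_ss L l)"
  by (rule kp_eq_rel, unfold kp_rels_def, rule UnI1, rule UnI1, rule UnI2) blast

lemma kp_KP3:
  "l \<in> Mor L \<Longrightarrow> m \<in> Mor L \<Longrightarrow> dg L l = dg L m \<Longrightarrow> dg L l \<noteq> 0 \<Longrightarrow>
   kp_eq L (fa_mul (kp_ss L l) (kp_s L m)) (if l = m then kp_p L (sr L l) else fa_zero)"
  by (rule kp_eq_rel, unfold kp_rels_def, rule UnI1, rule UnI2) blast

lemma kp_KP4:
  "v \<in> Obj L \<Longrightarrow> n \<noteq> 0 \<Longrightarrow>
   kp_eq L (kp_p L v) (fa_sum (vLn L v n) (\<lambda>l. fa_mul (kp_s L l) (kp_ss L l)))"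
  by (rule kp_eq_rel, unfold kp_rels_def, rule UnI2) blast

context k_graph
begin

lemma kp_p_idem: "v \<in> Obj L \<Longrightarrow> kp_eq L (fa_mul (kp_p L v) (kp_p L v)) (kp_p L v)"
  using kp_KP1[of v L v] by simp

lemma kp_s_mul:
  assumes "l \<in> Mor L" "m \<in> Mor L" "sr L l = rg L m"
  shows "kp_eq L (fa_mul (kp_s L l) (kp_s L m)) (kp_s L (cmp L l m))"
proof (cases "dg L l = 0")
  case l: True
  have lm: "cmp L l m = m" "rg L l = rg L m"
    using cmp_dg_0_left[OF assms(1) l assms(2,3)] dg_0_eq_idt(2)[OF assms(1) l] assms(3) by simp_all
  show ?thesis
  proof (cases "dg L m = 0")
    case m: True
    show ?thesis
      unfolding lm(1) kp_s_dg_0[OF l] kp_s_dg_0[OF m] lm(2)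
      using kp_p_idem rg_sr_Obj[OF assms(2)] by blast
  qed (unfold lm(1) kp_s_dg_0[OF l] lm(2), rule kp_KP2_p_s[OF assms(2)])
next
  case l: False
  show ?thesis
  proof (cases "dg L m = 0")
    case m: True
    show ?thesis
      unfolding cmp_dg_0_right[OF assms(2) m assms(1,3)] kp_s_dg_0[OF m] assms(3)[symmetric]
      by (rule kp_KP2_s_p[OF assms(1) l])
  qed (rule kp_KP2_s[OF assms(1,2) assms(3)[symmetric] l])
qed

lemma kp_ss_mul:
  assumes "l \<in> Mor L" "m \<in> Mor L" "sr L l = rg L m"
  shows "kp_eq L (fa_mul (kp_ss L m) (kp_ss L l)) (kp_ss L (cmp L l m))"
proof (cases "dg L l = 0")
  case l: True
  have lm: "cmp L l m = m" "rg L l = rg L m"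
    using cmp_dg_0_left[OF assms(1) l assms(2,3)] dg_0_eq_idt(2)[OF assms(1) l] assms(3) by simp_all
  show ?thesis
  proof (cases "dg L m = 0")
    case m: True
    show ?thesis
      unfolding lm(1) kp_ss_dg_0[OF l] kp_ss_dg_0[OF m] lm(2)
      using kp_p_idem rg_sr_Obj[OF assms(2)] by blast
  qed (unfold lm(1) kp_ss_dg_0[OF l] lm(2), rule kp_KP2_ss_p[OF assms(2)])
next
  case l: False
  show ?thesis
  proof (cases "dg L m = 0")
    case m: True
    show ?thesis
      unfolding cmp_dg_0_right[OF assms(2) m assms(1,3)] kp_ss_dg_0[OF m] assms(3)[symmetric]
      by (rule kp_KP2_p_ss[OF assms(1) l])
  qed (rule kp_KP2_ss[OF assms(1,2) assms(3)[symmetric] l])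
qed

lemma kp_ss_s_self:
  assumes "l \<in> Mor L"
  shows "kp_eq L (fa_mul (kp_ss L l) (kp_s L l)) (kp_p L (sr L l))"
proof (cases "dg L l = 0")
  case True
  show ?thesis
    unfolding kp_s_dg_0[OF True] kp_ss_dg_0[OF True] dg_0_eq_idt(2)[OF assms True]
    using kp_p_idem rg_sr_Obj[OF assms] by blast
qed (use kp_KP3[OF assms assms] in simp)

lemma kp_ss_s_ne:
  assumes "l \<in> Mor L" "m \<in> Mor L" "dg L l = dg L m" "l \<noteq> m"
  shows "kp_eq L (fa_mul (kp_ss L l) (kp_s L m)) fa_zero"
proof (cases "dg L l = 0")
  case True
  then have "rg L l \<noteq> rg L m" using dg_0_eq_idt(1) assms by metis
  then show ?thesis
    unfolding kp_ss_dg_0[OF True] kp_s_dg_0[OF True[unfolded assms(3)]]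
    using kp_KP1[of "rg L l" L "rg L m"] rg_sr_Obj assms(1,2) by simp
qed (use kp_KP3[OF assms(1-3)] assms(4) in simp)

lemma kp_s_p_sr: "l \<in> Mor L \<Longrightarrow> kp_eq L (fa_mul (kp_s L l) (kp_p L (sr L l))) (kp_s L l)"
  by (cases "dg L l = 0")
    (simp_all add: kp_s_dg_0 dg_0_eq_idt(2) kp_p_idem rg_sr_Obj kp_KP2_s_p)

lemma kp_ss_p_rg: "l \<in> Mor L \<Longrightarrow> kp_eq L (fa_mul (kp_ss L l) (kp_p L (rg L l))) (kp_ss L l)"
  by (cases "dg L l = 0") (simp_all add: kp_ss_dg_0 kp_p_idem rg_sr_Obj kp_KP2_ss_p)

lemma kp_p_rg_s: "l \<in> Mor L \<Longrightarrow> kp_eq L (fa_mul (kp_p L (rg L l)) (kp_s L l)) (kp_s L l)"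
  by (cases "dg L l = 0") (simp_all add: kp_s_dg_0 kp_p_idem rg_sr_Obj kp_KP2_p_s)

lemma kp_ss_cmp_s:
  assumes "l \<in> Mor L" "m \<in> Mor L" "sr L l = rg L m"
  shows "kp_eq L (fa_mul (kp_ss L (cmp L l m)) (kp_s L l)) (kp_ss L m :: ('v,'a,'r::comm_ring_1) fa)"
proof -
  have "kp_eq L (fa_mul (kp_ss L (cmp L l m)) (kp_s L l))
      (fa_mul (kp_ss L m) (fa_mul (kp_ss L l) (kp_s L l)) :: ('v,'a,'r) fa)"
    using kp_eq_mul_right[OF kp_eq_sym[OF kp_ss_mul[OF assms]], of "kp_s L l"] by (simp add: fa_mul_assoc)
  also have "kp_eq L \<dots> (fa_mul (kp_ss L m) (kp_p L (rg L m)))"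
    using kp_eq_mul_left[OF kp_ss_s_self[OF assms(1)] fa_fin_kp(3)] unfolding assms(3) .
  also have "kp_eq L \<dots> (kp_ss L m)"
    using kp_ss_p_rg[OF assms(2)] .
  finally show ?thesis .
qed

lemma kp_ss_s_cmp:
  assumes "l \<in> Mor L" "m \<in> Mor L" "sr L l = rg L m"
  shows "kp_eq L (fa_mul (kp_ss L l) (kp_s L (cmp L l m))) (kp_s L m :: ('v,'a,'r::comm_ring_1) fa)"
proof -
  have "kp_eq L (fa_mul (kp_ss L l) (kp_s L (cmp L l m)))
      (fa_mul (fa_mul (kp_ss L l) (kp_s L l)) (kp_s L m) :: ('v,'a,'r) fa)"
    using kp_eq_mul_left[OF kp_eq_sym[OF kp_s_mul[OF assms]], of "kp_ss L l"] by (simp add: fa_mul_assoc)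
  also have "kp_eq L \<dots> (fa_mul (kp_p L (rg L m)) (kp_s L m))"
    using kp_eq_mul_right[OF kp_ss_s_self[OF assms(1)] fa_fin_kp(2)] unfolding assms(3) .
  also have "kp_eq L \<dots> (kp_s L m)"
    using kp_p_rg_s[OF assms(2)] .
  finally show ?thesis .
qed

end

context k_graph_no_sources
begin

lemma kp_s_ss_expand:
  assumes l: "l \<in> Mor L" and n: "n \<noteq> 0"
  shows "kp_eq L (fa_mul (kp_s L l) (kp_ss L l))
           (fa_sum (cmp L l ` vLn L (sr L l) n) (\<lambda>r. fa_mul (kp_s L r) (kp_ss L r))
             :: ('v,'a,'r::comm_ring_1) fa)"
proof -
  define V where "V = vLn L (sr L l) n"
  have v: "sr L l \<in> Obj L" using rg_sr_Obj[OF l] by simp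
  then have V: "finite V" using no_sources unfolding row_finite_no_sources_def V_def by auto
  have "kp_eq L (fa_mul (kp_s L l) (kp_ss L l))
      (fa_mul (fa_mul (kp_s L l) (kp_p L (sr L l))) (kp_ss L l) :: ('v,'a,'r) fa)"
    by (rule kp_eq_mul_right[OF kp_eq_sym[OF kp_s_p_sr[OF l]]]) simp
  also have "kp_eq L \<dots> (fa_mul (fa_mul (kp_s L l) (fa_sum V (\<lambda>t. fa_mul (kp_s L t) (kp_ss L t))))
      (kp_ss L l))"
    unfolding V_def by (intro kp_eq_mul_right kp_eq_mul_left kp_KP4[OF v n]) simp_all
  also have "\<dots> = fa_sum V (\<lambda>t. fa_mul (fa_mul (kp_s L l) (kp_s L t)) (fa_mul (kp_ss L t) (kp_ss L l)))"
    unfolding fa_mul_assoc fa_mul_sum_left fa_mul_sum_right by (simp add: fa_mul_assoc)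
  also have "kp_eq L \<dots> (fa_sum V (\<lambda>t. fa_mul (kp_s L (cmp L l t)) (kp_ss L (cmp L l t))))"
  proof (rule kp_eq_sum[OF V])
    fix t assume "t \<in> V"
    then have t: "t \<in> Mor L" "sr L l = rg L t" unfolding V_def vLn_def by auto
    show "kp_eq L (fa_mul (fa_mul (kp_s L l) (kp_s L t)) (fa_mul (kp_ss L t) (kp_ss L l)))
        (fa_mul (kp_s L (cmp L l t)) (kp_ss L (cmp L l t)))"
      by (rule kp_eq_mul[OF kp_s_mul[OF l t] kp_ss_mul[OF l t]]) simp_all
  qed
  also have "\<dots> = fa_sum (cmp L l ` V) (\<lambda>r. fa_mul (kp_s L r) (kp_ss L r))"
  proof -
    have "inj_on (cmp L l) V"
      using cmp_factors_unique[OF l _ l] unfolding V_def vLn_def by (auto intro!: inj_onI)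
    then show ?thesis unfolding fa_sum_def by (simp add: sum.reindex)
  qed
  finally show ?thesis unfolding V_def .
qed

lemma cmp_vLn_eq:
  assumes l: "l \<in> Mor L" and D: "dg L l \<le> D"
  shows "cmp L l ` vLn L (sr L l) (D - dg L l) = {r \<in> Mor L. dg L r = D \<and> cyl L r \<subseteq> cyl L l}"
proof (intro equalityI subsetI)
  fix r assume "r \<in> cmp L l ` vLn L (sr L l) (D - dg L l)"
  then obtain t where t: "t \<in> Mor L" "sr L l = rg L t" "dg L t = D - dg L l" "r = cmp L l t"
    unfolding vLn_def by auto
  then have "cyl L r \<subseteq> cyl L l" using cyl_cmpD(1)[OF _ l t(1,2)] by blast
  then show "r \<in> {r \<in> Mor L. dg L r = D \<and> cyl L r \<subseteq> cyl L l}"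
    using cmp_props[OF l t(1,2)] t D by (simp add: le_fun_def fun_eq_iff)
next
  fix r assume "r \<in> {r \<in> Mor L. dg L r = D \<and> cyl L r \<subseteq> cyl L l}"
  then have r: "r \<in> Mor L" "dg L r = D" "cyl L r \<subseteq> cyl L l" by auto
  then obtain y where y: "y \<in> cyl L r" "y \<in> cyl L l" using cyl_nonempty by blast
  have "dg L l + (D - dg L l) = D" using D by (simp add: le_fun_def fun_eq_iff)
  then have "r = cmp L l (y (dg L l) D)" "sr L l = rg L (y (dg L l) D)"
    using cyl_prefix_cmp[OF y(2), of "D - dg L l"] y(1) r(2) unfolding cyl_def by simp_all
  moreover have "y (dg L l) D \<in> vLn L (sr L l) (D - dg L l)"
    using inf_path_Mor[of y "dg L l" D] y D calculation(2) unfolding vLn_def cyl_def by simp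
  ultimately show "r \<in> cmp L l ` vLn L (sr L l) (D - dg L l)" by blast
qed

lemma kp_s_ss_eq_if_cyl_eq:
  assumes l: "l \<in> Mor L" and l': "l' \<in> Mor L" and C: "cyl L l = cyl L l'"
  shows "kp_eq L (fa_mul (kp_s L l) (kp_ss L l))
           (fa_mul (kp_s L l') (kp_ss L l') :: ('v,'a,'r::comm_ring_1) fa)"
proof -
  define D where "D = dg L l + dg L l' + 1"
  have D: "dg L l \<le> D" "dg L l' \<le> D" unfolding D_def by (simp_all add: le_fun_def)
  have "(D - dg L l) i \<noteq> 0" "(D - dg L l') i \<noteq> 0" for i unfolding D_def by simp_all
  then have D0: "D - dg L l \<noteq> 0" "D - dg L l' \<noteq> 0" by (metis zero_fun_def)+
  have "cmp L l ` vLn L (sr L l) (D - dg L l) = cmp L l' ` vLn L (sr L l') (D - dg L l')"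
    using cmp_vLn_eq[OF l D(1)] cmp_vLn_eq[OF l' D(2)] C by simp
  from kp_s_ss_expand[OF l D0(1), unfolded this]
  show ?thesis by (rule kp_eq_trans[OF _ kp_eq_sym[OF kp_s_ss_expand[OF l' D0(2)]]])
qed

end

section \<open>Regular paths\<close>

lemma Fset_sym: "Fset L \<alpha> \<beta> = Fset L \<beta> \<alpha>"
  unfolding Fset_def by auto

context k_graph
begin

lemma openin_path_top_cyl_subset:
  assumes "openin (path_top L) T" "x \<in> T" "x \<in> inf_paths L"
  shows "\<exists>n. cyl L (x 0 n) \<subseteq> T"
proof -
  have "generate_topology_on {cyl L \<mu> | \<mu>. \<mu> \<in> Mor L} T"
    using assms(1) unfolding path_top_def by (simp add: openin_topology_generated_by_iff)
  then show ?thesis using assms(2)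
  proof (induction T rule: generate_topology_on.induct)
    case (Int a b)
    then obtain n1 n2 where "cyl L (x 0 n1) \<subseteq> a" "cyl L (x 0 n2) \<subseteq> b" by blast
    then show ?case
      using cyl_prefix_subset[OF assms(3) sup_ge1[of n1 n2]] cyl_prefix_subset[OF assms(3) sup_ge2[of n2 n1]]
      by blast
  next
    case (UN K)
    then show ?case by blast
  next
    case (Basis s)
    then obtain \<mu> where s: "s = cyl L \<mu>" by blast
    then have "cyl L (x 0 (dg L \<mu>)) \<subseteq> s" using Basis.prems unfolding cyl_def by simp
    then show ?case by blast
  qed simp
qed

lemma regular_path_Fset_nbhd:
  assumes "x \<in> regular_paths L" "(\<alpha>, \<beta>) \<in> KSigma L" "x \<in> Fset L \<alpha> \<beta>"
  shows "\<exists>n. cyl L (x 0 n) \<subseteq> Fset L \<alpha> \<beta>"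
proof -
  have "\<alpha> \<in> Mor L" using assms(2) unfolding KSigma_def by simp
  moreover have "Fset L \<alpha> \<beta> \<subseteq> cyl L \<alpha>" unfolding Fset_def by auto
  ultimately have "Fset L \<alpha> \<beta> \<subseteq> topspace (path_top L)"
    unfolding path_top_def by auto
  then have "x \<in> path_top L closure_of Fset L \<alpha> \<beta>"
    using closure_of_subset assms(3) by blast
  moreover have "x \<notin> path_top L frontier_of Fset L \<alpha> \<beta>"
    using assms(1,2) unfolding regular_paths_def by blast
  ultimately have "x \<in> path_top L interior_of Fset L \<alpha> \<beta>"
    unfolding frontier_of_def by blast
  then obtain T where T: "openin (path_top L) T" "x \<in> T" "T \<subseteq> Fset L \<alpha> \<beta>"
    unfolding interior_of_def by blast
  have "x \<in> inf_paths L" using assms(1) unfolding regular_paths_def by simp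
  then show ?thesis using openin_path_top_cyl_subset[OF T(1,2)] T(3) by blast
qed

lemma Fset_segment_eq:
  assumes "x \<in> Fset L \<alpha> \<beta>"
  shows "x (dg L \<alpha>) (dg L \<alpha> + n) = x (dg L \<beta>) (dg L \<beta> + n)"
proof -
  have "pshift x (dg L \<alpha>) 0 n = pshift x (dg L \<beta>) 0 n"
    using assms unfolding Fset_def by simp
  then show ?thesis unfolding pshift_def by (simp add: le_fun_def add.commute)
qed

lemma Fset_cyl_cmp:
  assumes "y \<in> Fset L \<alpha> \<beta>" "y \<in> cyl L (cmp L \<alpha> \<delta>)" "\<alpha> \<in> Mor L" "\<delta> \<in> Mor L" "sr L \<alpha> = rg L \<delta>"
  shows "y \<in> cyl L (cmp L \<beta> \<delta>)"
proof (rule cyl_cmpI)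
  show "y \<in> cyl L \<beta>" using assms(1) unfolding Fset_def by blast
  show "y (dg L \<beta>) (dg L \<beta> + dg L \<delta>) = \<delta>"
    using cyl_cmpD(2)[OF assms(2-5)] Fset_segment_eq[OF assms(1)] by simp
qed (rule assms(4))

lemma pshift_eq_if_segments_eq:
  assumes "x \<in> inf_paths L" and seg: "\<And>n. x a (a + n) = x b (b + n)"
  shows "pshift x a = pshift x b"
proof (intro ext)
  fix m n :: "'k \<Rightarrow> nat"
  show "pshift x a m n = pshift x b m n"
  proof (cases "m \<le> n")
    case True
    have le: "a \<le> a + m" "a + m \<le> a + n" "b \<le> b + m" "b + m \<le> b + n"
      using True by (auto simp: le_fun_def)
    note A = inf_path_cmp[OF assms(1) le(1,2)] inf_path_Mor[OF assms(1) le(1)]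
      inf_path_Mor[OF assms(1) le(2)]
    note B = inf_path_cmp[OF assms(1) le(3,4)] inf_path_Mor[OF assms(1) le(3)]
      inf_path_Mor[OF assms(1) le(4)]
    have "x a (a + m) = x b (b + m) \<and> x (a + m) (a + n) = x (b + m) (b + n)"
    proof (rule cmp_factors_unique)
      show "cmp L (x a (a + m)) (x (a + m) (a + n)) = cmp L (x b (b + m)) (x (b + m) (b + n))"
        using A(1) B(1) seg[of n] by simp
    qed (use A B in simp_all)
    then have "x (a + m) (a + n) = x (b + m) (b + n)" by blast
    then show ?thesis using True unfolding pshift_def by (simp add: add.commute)
  qed (simp add: pshift_def)
qed

lemma kp_prod_zero_outside_Fset:
  assumes "(\<alpha>, \<beta>) \<in> KSigma L" "x \<in> inf_paths L" "x \<notin> Fset L \<alpha> \<beta>"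
  shows "\<exists>\<mu>\<in>Mor L. \<exists>\<nu>\<in>Mor L. x \<in> cyl L \<mu> \<inter> cyl L \<nu> \<and>
           kp_eq L (fa_prod [kp_s L \<mu>, kp_ss L \<mu>, kp_s L \<alpha>, kp_ss L \<beta>, kp_s L \<nu>, kp_ss L \<nu>])
                   (fa_zero :: ('v,'a,'r::comm_ring_1) fa)"
proof -
  have \<alpha>: "\<alpha> \<in> Mor L" and \<beta>: "\<beta> \<in> Mor L" and sr: "sr L \<alpha> = sr L \<beta>"
    using assms(1) unfolding KSigma_def by auto
  have prefix: "x 0 (dg L l) \<in> Mor L" "dg L (x 0 (dg L l)) = dg L l" "x \<in> cyl L (x 0 (dg L l))" for l
    using inf_path_Mor[OF assms(2), of 0 "dg L l"] inf_path_in_cyl[OF assms(2)] by (simp_all add: le_fun_def)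
  consider (not_\<alpha>) "x \<notin> cyl L \<alpha>" | (not_\<beta>) "x \<notin> cyl L \<beta>" | (both) "x \<in> cyl L \<alpha>" "x \<in> cyl L \<beta>"
    by blast
  then show ?thesis
  proof cases
    case not_\<alpha>
    define \<mu> where "\<mu> = x 0 (dg L \<alpha>)"
    have "\<mu> \<noteq> \<alpha>" using not_\<alpha> prefix(3)[of \<alpha>] unfolding \<mu>_def by metis
    then have "kp_eq L (fa_prod [kp_ss L \<mu>, kp_s L \<alpha>]) (fa_zero :: ('v,'a,'r) fa)"
      using kp_ss_s_ne[OF prefix(1) \<alpha> prefix(2)] unfolding \<mu>_def by simp
    from kp_eq_prod_zero_infix[OF this, of "[kp_s L \<mu>]" "[kp_ss L \<beta>, kp_s L \<mu>, kp_ss L \<mu>]"]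
    show ?thesis using prefix[of \<alpha>] unfolding \<mu>_def by auto
  next
    case not_\<beta>
    define \<nu> where "\<nu> = x 0 (dg L \<beta>)"
    have "\<beta> \<noteq> \<nu>" using not_\<beta> prefix(3)[of \<beta>] unfolding \<nu>_def by metis
    then have "kp_eq L (fa_prod [kp_ss L \<beta>, kp_s L \<nu>]) (fa_zero :: ('v,'a,'r) fa)"
      using kp_ss_s_ne[OF \<beta> prefix(1) prefix(2)[symmetric]] unfolding \<nu>_def by simp
    from kp_eq_prod_zero_infix[OF this, of "[kp_s L \<nu>, kp_ss L \<nu>, kp_s L \<alpha>]" "[kp_ss L \<nu>]"]
    show ?thesis using prefix[of \<beta>] unfolding \<nu>_def by auto
  next
    case both
    obtain N where N: "x (dg L \<alpha>) (dg L \<alpha> + N) \<noteq> x (dg L \<beta>) (dg L \<beta> + N)"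
      using pshift_eq_if_segments_eq[OF assms(2)] assms(3) both unfolding Fset_def by blast
    define \<mu> \<nu> where "\<mu> = x (dg L \<alpha>) (dg L \<alpha> + N)" and "\<nu> = x (dg L \<beta>) (dg L \<beta> + N)"
    have \<mu>: "\<mu> \<in> Mor L" "dg L \<mu> = N" "sr L \<alpha> = rg L \<mu>" "x \<in> cyl L (cmp L \<alpha> \<mu>)"
      using inf_path_Mor[OF assms(2), of "dg L \<alpha>" "dg L \<alpha> + N"] cyl_prefix_cmp[OF both(1), of N]
        inf_path_in_cyl[OF assms(2), of "dg L \<alpha> + N"] unfolding \<mu>_def by (auto simp: le_fun_def)
    have \<nu>: "\<nu> \<in> Mor L" "dg L \<nu> = N" "sr L \<beta> = rg L \<nu>" "x \<in> cyl L (cmp L \<beta> \<nu>)"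
      using inf_path_Mor[OF assms(2), of "dg L \<beta>" "dg L \<beta> + N"] cyl_prefix_cmp[OF both(2), of N]
        inf_path_in_cyl[OF assms(2), of "dg L \<beta> + N"] unfolding \<nu>_def by (auto simp: le_fun_def)
    have "kp_eq L (fa_prod [kp_s L (cmp L \<alpha> \<mu>), kp_ss L (cmp L \<alpha> \<mu>), kp_s L \<alpha>, kp_ss L \<beta>,
        kp_s L (cmp L \<beta> \<nu>), kp_ss L (cmp L \<beta> \<nu>)])
        (fa_prod [kp_s L (cmp L \<alpha> \<mu>), kp_ss L \<mu>, kp_ss L \<beta>, kp_s L (cmp L \<beta> \<nu>),
        kp_ss L (cmp L \<beta> \<nu>)] :: ('v,'a,'r) fa)"
      using kp_eq_prod_infix[of L "[kp_ss L (cmp L \<alpha> \<mu>), kp_s L \<alpha>]" "[kp_ss L \<mu>]"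
          "[kp_s L (cmp L \<alpha> \<mu>)]" "[kp_ss L \<beta>, kp_s L (cmp L \<beta> \<nu>), kp_ss L (cmp L \<beta> \<nu>)]"]
        kp_ss_cmp_s[OF \<alpha> \<mu>(1,3)] by simp
    also have "kp_eq L \<dots> (fa_prod [kp_s L (cmp L \<alpha> \<mu>), kp_ss L \<mu>, kp_s L \<nu>, kp_ss L (cmp L \<beta> \<nu>)])"
      using kp_eq_prod_infix[of L "[kp_ss L \<beta>, kp_s L (cmp L \<beta> \<nu>)]" "[kp_s L \<nu>]"
          "[kp_s L (cmp L \<alpha> \<mu>), kp_ss L \<mu>]" "[kp_ss L (cmp L \<beta> \<nu>)]"]
        kp_ss_s_cmp[OF \<beta> \<nu>(1,3)] by simp
    also have "kp_eq L \<dots> fa_zero"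
      using kp_eq_prod_zero_infix[of L "[kp_ss L \<mu>, kp_s L \<nu>]" "[kp_s L (cmp L \<alpha> \<mu>)]"
          "[kp_ss L (cmp L \<beta> \<nu>)]"]
        kp_ss_s_ne[OF \<mu>(1) \<nu>(1)] \<mu>(2) \<nu>(2) N unfolding \<mu>_def \<nu>_def by simp
    finally show ?thesis
      using \<mu> \<nu> cmp_props[OF \<alpha> \<mu>(1,3)] cmp_props[OF \<beta> \<nu>(1,3)] by blast
  qed
qed

lemma Fset_common_extension:
  assumes "x \<in> Fset L \<alpha> \<beta>" "\<alpha> \<in> Mor L" "cyl L (x 0 n) \<subseteq> Fset L \<alpha> \<beta>"
  obtains \<gamma> where "\<gamma> \<in> Mor L" "sr L \<alpha> = rg L \<gamma>" "sr L \<beta> = rg L \<gamma>"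
    "x \<in> cyl L (cmp L \<alpha> \<gamma>)" "x \<in> cyl L (cmp L \<beta> \<gamma>)"
    "cyl L (cmp L \<alpha> \<gamma>) \<subseteq> Fset L \<alpha> \<beta>" "cyl L (cmp L \<beta> \<gamma>) \<subseteq> Fset L \<alpha> \<beta>"
proof
  define \<gamma> where "\<gamma> = x (dg L \<alpha>) (dg L \<alpha> + n)"
  have x: "x \<in> inf_paths L" "x \<in> cyl L \<alpha>" "x \<in> cyl L \<beta>" using assms(1) unfolding Fset_def cyl_def by auto
  show \<gamma>: "\<gamma> \<in> Mor L" using inf_path_Mor[OF x(1)] unfolding \<gamma>_def by (simp add: le_fun_def)
  show "sr L \<alpha> = rg L \<gamma>" "sr L \<beta> = rg L \<gamma>"
    using cyl_prefix_cmp(1)[OF x(2)] cyl_prefix_cmp(1)[OF x(3)] Fset_segment_eq[OF assms(1)]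
    unfolding \<gamma>_def by simp_all
  have prefix: "x 0 (dg L \<alpha> + n) = cmp L \<alpha> \<gamma>" "x 0 (dg L \<beta> + n) = cmp L \<beta> \<gamma>"
    using cyl_prefix_cmp(2)[OF x(2)] cyl_prefix_cmp(2)[OF x(3)] Fset_segment_eq[OF assms(1)]
    unfolding \<gamma>_def by simp_all
  show "x \<in> cyl L (cmp L \<alpha> \<gamma>)" "x \<in> cyl L (cmp L \<beta> \<gamma>)"
    using inf_path_in_cyl[OF x(1)] unfolding prefix[symmetric] by blast+
  have "n \<le> dg L \<alpha> + n" "n \<le> dg L \<beta> + n" by (simp_all add: le_fun_def)
  then show "cyl L (cmp L \<alpha> \<gamma>) \<subseteq> Fset L \<alpha> \<beta>" "cyl L (cmp L \<beta> \<gamma>) \<subseteq> Fset L \<alpha> \<beta>"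
    using cyl_prefix_subset[OF x(1)] assms(3) unfolding prefix[symmetric] by blast+
qed

lemma kp_prod_cmp_eq:
  assumes "\<alpha> \<in> Mor L" "\<beta> \<in> Mor L" "\<gamma> \<in> Mor L" "sr L \<alpha> = rg L \<gamma>" "sr L \<beta> = rg L \<gamma>"
  shows "kp_eq L (fa_prod [kp_s L (cmp L \<alpha> \<gamma>), kp_ss L (cmp L \<alpha> \<gamma>), kp_s L \<alpha>, kp_ss L \<beta>,
                           kp_s L (cmp L \<beta> \<gamma>), kp_ss L (cmp L \<beta> \<gamma>)])
                  (fa_mul (kp_s L (cmp L \<alpha> \<gamma>)) (kp_ss L (cmp L \<beta> \<gamma>)) :: ('v,'a,'r::comm_ring_1) fa)"
proof -
  let ?a = "cmp L \<alpha> \<gamma>" and ?b = "cmp L \<beta> \<gamma>"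
  have "kp_eq L (fa_prod [kp_s L ?a, kp_ss L ?a, kp_s L \<alpha>, kp_ss L \<beta>, kp_s L ?b, kp_ss L ?b])
      (fa_prod [kp_s L ?a, kp_ss L \<gamma>, kp_ss L \<beta>, kp_s L ?b, kp_ss L ?b] :: ('v,'a,'r) fa)"
    using kp_eq_prod_infix[of L "[kp_ss L ?a, kp_s L \<alpha>]" "[kp_ss L \<gamma>]" "[kp_s L ?a]"
        "[kp_ss L \<beta>, kp_s L ?b, kp_ss L ?b]"] kp_ss_cmp_s[OF assms(1,3,4)] by simp
  also have "kp_eq L \<dots> (fa_prod [kp_s L ?a, kp_ss L \<gamma>, kp_s L \<gamma>, kp_ss L ?b])"
    using kp_eq_prod_infix[of L "[kp_ss L \<beta>, kp_s L ?b]" "[kp_s L \<gamma>]" "[kp_s L ?a, kp_ss L \<gamma>]"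
        "[kp_ss L ?b]"] kp_ss_s_cmp[OF assms(2,3,5)] by simp
  also have "kp_eq L \<dots> (fa_prod [kp_s L ?a, kp_p L (sr L \<gamma>), kp_ss L ?b])"
    using kp_eq_prod_infix[of L "[kp_ss L \<gamma>, kp_s L \<gamma>]" "[kp_p L (sr L \<gamma>)]" "[kp_s L ?a]"
        "[kp_ss L ?b]"] kp_ss_s_self[OF assms(3)] by simp
  also have "kp_eq L \<dots> (fa_prod [kp_s L ?a, kp_ss L ?b])"
    using kp_eq_prod_infix[of L "[kp_s L ?a, kp_p L (sr L \<gamma>)]" "[kp_s L ?a]" "[]" "[kp_ss L ?b]"]
      kp_s_p_sr[of ?a] cmp_props[OF assms(1,3,4)] by simp
  finally show ?thesis by simp
qed

end

context k_graph_no_sources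
begin

lemma cycline_if_cyl_subset_Fset:
  assumes "\<alpha> \<in> Mor L" "\<beta> \<in> Mor L" "\<gamma> \<in> Mor L" "sr L \<alpha> = rg L \<gamma>" "sr L \<beta> = rg L \<gamma>"
    and "cyl L (cmp L \<alpha> \<gamma>) \<subseteq> Fset L \<alpha> \<beta>" "cyl L (cmp L \<beta> \<gamma>) \<subseteq> Fset L \<alpha> \<beta>"
  shows "cycline L TYPE('r::comm_ring_1) (cmp L \<alpha> \<gamma>) (cmp L \<beta> \<gamma>)"
  unfolding cycline_def
proof (intro conjI ballI impI)
  show "sr L (cmp L \<alpha> \<gamma>) = sr L (cmp L \<beta> \<gamma>)"
    using cmp_props[OF assms(1,3,4)] cmp_props[OF assms(2,3,5)] by simp
  fix g assume g: "g \<in> Mor L" "rg L g = sr L (cmp L \<alpha> \<gamma>)"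
  have \<gamma>g: "cmp L \<gamma> g \<in> Mor L" "rg L (cmp L \<gamma> g) = rg L \<gamma>"
    using cmp_props[OF assms(3) g(1)] cmp_props[OF assms(1,3,4)] g(2) by auto
  have assoc: "cmp L (cmp L \<alpha> \<gamma>) g = cmp L \<alpha> (cmp L \<gamma> g)" "cmp L (cmp L \<beta> \<gamma>) g = cmp L \<beta> (cmp L \<gamma> g)"
    using cmp_assoc[OF assms(1,3) g(1) assms(4)] cmp_assoc[OF assms(2,3) g(1) assms(5)]
      cmp_props[OF assms(1,3,4)] g(2) by simp_all
  have "cyl L (cmp L \<alpha> (cmp L \<gamma> g)) = cyl L (cmp L \<beta> (cmp L \<gamma> g))"
  proof (intro equalityI subsetI)
    fix y assume y: "y \<in> cyl L (cmp L \<alpha> (cmp L \<gamma> g))"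
    then have "y \<in> Fset L \<alpha> \<beta>"
      using assms(6) cyl_cmpD(1)[OF y[folded assoc(1)]] cmp_props[OF assms(1,3,4)] g by auto
    then show "y \<in> cyl L (cmp L \<beta> (cmp L \<gamma> g))"
      using Fset_cyl_cmp[OF _ y assms(1) \<gamma>g(1)] \<gamma>g(2) assms(4) by simp
  next
    fix y assume y: "y \<in> cyl L (cmp L \<beta> (cmp L \<gamma> g))"
    then have "y \<in> Fset L \<alpha> \<beta>"
      using assms(7) cyl_cmpD(1)[OF y[folded assoc(2)]] cmp_props[OF assms(2,3,5)] cmp_props[OF assms(1,3,4)] g
      by auto
    then show "y \<in> cyl L (cmp L \<alpha> (cmp L \<gamma> g))"
      using Fset_cyl_cmp[OF _ y assms(2) \<gamma>g(1)] \<gamma>g(2) assms(5) Fset_sym[of L \<alpha> \<beta>] by simp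
  qed
  moreover have "cmp L \<alpha> (cmp L \<gamma> g) \<in> Mor L" "cmp L \<beta> (cmp L \<gamma> g) \<in> Mor L"
    using cmp_props[OF assms(1) \<gamma>g(1)] cmp_props[OF assms(2) \<gamma>g(1)] \<gamma>g(2) assms(4,5) by simp_all
  ultimately show "kp_eq L (fa_mul (kp_s L (cmp L (cmp L \<alpha> \<gamma>) g)) (kp_ss L (cmp L (cmp L \<alpha> \<gamma>) g)))
      (fa_mul (kp_s L (cmp L (cmp L \<beta> \<gamma>) g)) (kp_ss L (cmp L (cmp L \<beta> \<gamma>) g)) :: ('v,'a,'r) fa)"
    unfolding assoc using kp_s_ss_eq_if_cyl_eq by blast
qed

end

theorem lemma5p3:
  fixes L :: "('v,'a,'k::finite) kgraph"
    and \<alpha> \<beta> :: 'a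
    and x :: "('a,'k) ipath"
  assumes "kgraph L"
    and "row_finite_no_sources L"
    and "(\<alpha>, \<beta>) \<in> KSigma L"
    and "x \<in> regular_paths L"
  shows "(x \<notin> Fset L \<alpha> \<beta> \<longrightarrow>
           (\<exists>\<mu>\<in>Mor L. \<exists>\<nu>\<in>Mor L. x \<in> cyl L \<mu> \<inter> cyl L \<nu> \<and>
              kp_eq L (fa_prod [kp_s L \<mu>, kp_ss L \<mu>, kp_s L \<alpha>, kp_ss L \<beta>, kp_s L \<nu>, kp_ss L \<nu>])
                      (fa_zero :: ('v,'a,'r::comm_ring_1) fa)))
       \<and> (x \<in> Fset L \<alpha> \<beta> \<longrightarrow>
           (\<exists>\<gamma>\<in>Mor L. rg L \<gamma> = sr L \<alpha> \<and>
              x \<in> cyl L (cmp L \<alpha> \<gamma>) \<inter> cyl L (cmp L \<beta> \<gamma>) \<and>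
              kp_eq L (fa_prod [kp_s L (cmp L \<alpha> \<gamma>), kp_ss L (cmp L \<alpha> \<gamma>), kp_s L \<alpha>, kp_ss L \<beta>,
                                kp_s L (cmp L \<beta> \<gamma>), kp_ss L (cmp L \<beta> \<gamma>)])
                      (fa_mul (kp_s L (cmp L \<alpha> \<gamma>)) (kp_ss L (cmp L \<beta> \<gamma>)) :: ('v,'a,'r) fa) \<and>
              cycline L TYPE('r) (cmp L \<alpha> \<gamma>) (cmp L \<beta> \<gamma>)))"
proof (intro conjI impI)
  interpret k_graph_no_sources L by unfold_locales (fact assms)+
  have \<alpha>\<beta>: "\<alpha> \<in> Mor L" "\<beta> \<in> Mor L" using assms(3) unfolding KSigma_def by auto
  show "\<exists>\<mu>\<in>Mor L. \<exists>\<nu>\<in>Mor L. x \<in> cyl L \<mu> \<inter> cyl L \<nu> \<and>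
      kp_eq L (fa_prod [kp_s L \<mu>, kp_ss L \<mu>, kp_s L \<alpha>, kp_ss L \<beta>, kp_s L \<nu>, kp_ss L \<nu>])
              (fa_zero :: ('v,'a,'r) fa)" if "x \<notin> Fset L \<alpha> \<beta>"
    using kp_prod_zero_outside_Fset[OF assms(3) _ that] assms(4) unfolding regular_paths_def by blast
  assume F: "x \<in> Fset L \<alpha> \<beta>"
  obtain n where "cyl L (x 0 n) \<subseteq> Fset L \<alpha> \<beta>"
    using regular_path_Fset_nbhd[OF assms(4,3) F] by blast
  then obtain \<gamma> where \<gamma>: "\<gamma> \<in> Mor L" "sr L \<alpha> = rg L \<gamma>" "sr L \<beta> = rg L \<gamma>"
    "x \<in> cyl L (cmp L \<alpha> \<gamma>)" "x \<in> cyl L (cmp L \<beta> \<gamma>)"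
    "cyl L (cmp L \<alpha> \<gamma>) \<subseteq> Fset L \<alpha> \<beta>" "cyl L (cmp L \<beta> \<gamma>) \<subseteq> Fset L \<alpha> \<beta>"
    using Fset_common_extension[OF F \<alpha>\<beta>(1)] by blast
  then show "\<exists>\<gamma>\<in>Mor L. rg L \<gamma> = sr L \<alpha> \<and>
      x \<in> cyl L (cmp L \<alpha> \<gamma>) \<inter> cyl L (cmp L \<beta> \<gamma>) \<and>
      kp_eq L (fa_prod [kp_s L (cmp L \<alpha> \<gamma>), kp_ss L (cmp L \<alpha> \<gamma>), kp_s L \<alpha>, kp_ss L \<beta>,
                        kp_s L (cmp L \<beta> \<gamma>), kp_ss L (cmp L \<beta> \<gamma>)])
              (fa_mul (kp_s L (cmp L \<alpha> \<gamma>)) (kp_ss L (cmp L \<beta> \<gamma>)) :: ('v,'a,'r) fa) \<and>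
      cycline L TYPE('r) (cmp L \<alpha> \<gamma>) (cmp L \<beta> \<gamma>)"
    using kp_prod_cmp_eq[OF \<alpha>\<beta> \<gamma>(1-3)] cycline_if_cyl_subset_Fset[OF \<alpha>\<beta> \<gamma>(1-3,6,7)] by auto
qed

end
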